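(* Let $\Phi$ (dimension $d$), $\Psi$ (dimension $e$) be $\mathbf t$-modules over $K$, $\delta\in\mathrm{Der}(\Phi,\Psi)$, and let $0\to F\xrightarrow{i}X\xrightarrow{\pi}E\to0$ be the short exact sequence given by $\delta$, i.e. $F=\Psi$, $E=\Phi$, $X_a=\begin{bmatrix}\Phi_a&0\\ \delta(a)&\Psi_a\end{bmatrix}$, $i=\begin{bmatrix}0\\ I_e\end{bmatrix}$, $\pi=\begin{bmatrix}I_d&0\end{bmatrix}$. Let $G$ be a $\mathbf t$-module. Then: (i) there is an exact sequence of $\mathbb F_q[t]$-modules $$0\to\operatorname{Hom}_\tau(G,F)\xrightarrow{i\circ-}\operatorname{Hom}_\tau(G,X)\xrightarrow{\pi\circ-}\operatorname{Hom}_\tau(G,E)\xrightarrow{\delta\circ-}\operatorname{Ext}^1_\tau(G,F)\xrightarrow{-i\circ-}\operatorname{Ext}^1_\tau(G,X)\xrightarrow{-\pi\circ-}\operatorname{Ext}^1_\tau(G,E)\to0,$$ where $\delta\circ-$ sends $f$ to the class of the biderivation $a\mapsto\delta(a)f$, and $-i\circ-$, $-\pi\circ-$ send the class of a biderivation $\eta$ to the class of $a\mapsto -i\eta(a)$, resp. $a\mapsto-\pi\eta(a)$; (ii) there is an exact sequence of $\mathbb F_q[t]$-modules $$0\to\operatorname{Hom}_\tau(E,G)\xrightarrow{-\circ\pi}\operatorname{Hom}_\tau(X,G)\xrightarrow{-\circ i}\operatorname{Hom}_\tau(F,G)\xrightarrow{-\circ\delta}\operatorname{Ext}^1_\tau(E,G)\xrightarrow{-\circ(-\pi)}\operatorname{Ext}^1_\tau(X,G)\xrightarrow{-\circ(-i)}\operatorname{Ext}^1_\tau(F,G)\to0,$$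 where $-\circ\delta$ sends $h$ to the class of $a\mapsto h\delta(a)$, and the last two maps send the class of $\eta$ to the class of $a\mapsto-\eta(a)\pi$, resp. $a\mapsto-\eta(a)i$.
   Context: $A=\mathbb F_q[t]$, $K$ a field of characteristic $p$ with $\mathbb F_q$-algebra map $\iota:A\to K$, $\theta=\iota(t)$; $K\{\tau\}$ twisted polynomials with $\tau x=x^q\tau$. A $\mathbf t$-module of dimension $d$: $\mathbb F_q$-algebra homomorphism $\Phi:\mathbb F_q[t]\to\mathrm{Mat}_d(K\{\tau\})$ with $\Phi_t=(\theta I+N)+\sum_{i\ge1}M_i\tau^i$, $N$ nilpotent. $\operatorname{Hom}_\tau(\Psi,\Phi)$ (for $\Psi$ of dim $e$, $\Phi$ of dim $d$) is the set of $f\in\mathrm{Mat}_{d\times e}(K\{\tau\})$ with $f\Psi_t=\Phi_tf$, an $\mathbb F_q[t]$-module via $a\cdot f=\Phi_af$. $\mathrm{Der}(\Phi,\Psi)$: $\mathbb F_q$-linear $\delta:\mathbb F_q[t]\to\mathrm{Mat}_{e\times d}(K\{\tau\})$ with $\delta(ab)=\Psi_a\delta(b)+\delta(a)\Phi_b$; inner: $\delta^{(U)}(a)=U\Phi_a-\Psi_aU$; $\operatorname{Ext}^1_\tau(\Phi,\Psi)=\mathrm{Der}(\Phi,\Psi)/\mathrm{Der}_{in}(\Phi,\Psi)$ with $a*[\delta]=[\Psi_a\delta]$; this is the group (with Baer sum) of extensions $0\to\Psi\to X\to\Phi\to0$ of $\mathbf t$-modules, $[\delta]$ corresponding to $X_a=\begin{bmatrix}\Phi_a&0\\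 \delta(a)&\Psi_a\end{bmatrix}$. *)

theory Defs
  imports "HOL-Computational_Algebra.Polynomial"
begin

(* F_q realised as the set of roots of X^q - X in K (it is a subfield of K of
   cardinality q exactly when K is an F_q-algebra, which is assumed) *)
definition Fq :: "nat \<Rightarrow> 'k::field set" where
  "Fq q = {x. x ^ q = x}"

definition Aq :: "nat \<Rightarrow> 'k::field poly set" where
  "Aq q = {a. \<forall>i. coeff a i \<in> Fq q}"

(* sum_i a_i tau^i is represented by the polynomial sum_i a_i X^i;
   multiplication obeys tau x = x^q tau:  (a tau^i)(b tau^j) = a b^(q^i) tau^(i+j) *)
definition tmult :: "nat \<Rightarrow> 'k::field poly \<Rightarrow> 'k poly \<Rightarrow> 'k poly" where
  "tmult q f g = (\<Sum>i\<le>degree f. monom (coeff f i) i * map_poly (\<lambda>c. c ^ (q ^ i)) g)"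

type_synonym 'k tmatrix = "nat \<Rightarrow> nat \<Rightarrow> 'k poly"

(* M is an m x n matrix: entries outside the index range are zero *)
definition tmat :: "nat \<Rightarrow> nat \<Rightarrow> 'k::field tmatrix \<Rightarrow> bool" where
  "tmat m n M \<longleftrightarrow> (\<forall>i j. (m \<le> i \<or> n \<le> j) \<longrightarrow> M i j = 0)"

definition mzero :: "'k::field tmatrix" where
  "mzero = (\<lambda>i j. 0)"

definition madd :: "'k::field tmatrix \<Rightarrow> 'k tmatrix \<Rightarrow> 'k tmatrix" where
  "madd M N = (\<lambda>i j. M i j + N i j)"

definition mneg :: "'k::field tmatrix \<Rightarrow> 'k tmatrix" where
  "mneg M = (\<lambda>i j. - M i j)"

definition msub :: "'k::field tmatrix \<Rightarrow> 'k tmatrix \<Rightarrow> 'k tmatrix" where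
  "msub M N = (\<lambda>i j. M i j - N i j)"

definition mmul :: "nat \<Rightarrow> nat \<Rightarrow> 'k::field tmatrix \<Rightarrow> 'k tmatrix \<Rightarrow> 'k tmatrix" where
  "mmul q n M N = (\<lambda>i j. \<Sum>k<n. tmult q (M i k) (N k j))"

definition mone :: "nat \<Rightarrow> 'k::field tmatrix" where
  "mone n = (\<lambda>i j. if i = j \<and> i < n then 1 else 0)"

(* scalar (element of K, acting as a constant twisted polynomial) times matrix, from the left *)
definition mscal :: "'k::field \<Rightarrow> 'k tmatrix \<Rightarrow> 'k tmatrix" where
  "mscal c M = (\<lambda>i j. smult c (M i j))"

fun mpow :: "nat \<Rightarrow> nat \<Rightarrow> 'k::field tmatrix \<Rightarrow> nat \<Rightarrow> 'k tmatrix" where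
  "mpow q n M 0 = mone n"
| "mpow q n M (Suc k) = mmul q n M (mpow q n M k)"

(* Phi_t = T (a d x d matrix over K{tau}); Phi_a = a(T) for a in F_q[t] *)
definition tev :: "nat \<Rightarrow> nat \<Rightarrow> 'k::field tmatrix \<Rightarrow> 'k poly \<Rightarrow> 'k tmatrix" where
  "tev q d T a = (\<lambda>i j. \<Sum>k\<le>degree a. smult (coeff a k) (mpow q d T k i j))"

(* T = (theta I + N) + sum_{i>=1} M_i tau^i with N nilpotent (over K) *)
definition is_tmodule :: "nat \<Rightarrow> 'k::field \<Rightarrow> nat \<Rightarrow> 'k tmatrix \<Rightarrow> bool" where
  "is_tmodule q \<theta> d T \<longleftrightarrow> tmat d d T \<and>
     (let N = (\<lambda>i j. if i < d \<and> j < d then [: coeff (T i j) 0 - (if i = j then \<theta> else 0) :] else 0) in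
      \<exists>m. mpow q d N m = mzero)"

(* Hom_tau(Psi, Phi), Psi of dim e with Psi_t = S, Phi of dim d with Phi_t = T *)
definition Hom_tau :: "nat \<Rightarrow> nat \<Rightarrow> 'k::field tmatrix \<Rightarrow> nat \<Rightarrow> 'k tmatrix \<Rightarrow> 'k tmatrix set" where
  "Hom_tau q e S d T = {f. tmat d e f \<and> mmul q e f S = mmul q d T f}"

(* Der(Phi, Psi): Phi of dim d (Phi_t = T), Psi of dim e (Psi_t = S);
   F_q-linear maps delta : F_q[t] \<rightarrow> Mat_{e x d}(K{tau}) with the Leibniz rule
   (only the values on F_q[t] are relevant) *)
definition Der :: "nat \<Rightarrow> nat \<Rightarrow> 'k::field tmatrix \<Rightarrow> nat \<Rightarrow> 'k tmatrix
                     \<Rightarrow> ('k poly \<Rightarrow> 'k tmatrix) set" where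
  "Der q d T e S = {\<delta>.
     (\<forall>a\<in>Aq q. tmat e d (\<delta> a)) \<and>
     (\<forall>a\<in>Aq q. \<forall>b\<in>Aq q. \<delta> (a + b) = madd (\<delta> a) (\<delta> b)) \<and>
     (\<forall>c\<in>Fq q. \<forall>a\<in>Aq q. \<delta> (smult c a) = mscal c (\<delta> a)) \<and>
     (\<forall>a\<in>Aq q. \<forall>b\<in>Aq q. \<delta> (a * b) =
         madd (mmul q e (tev q e S a) (\<delta> b)) (mmul q d (\<delta> a) (tev q d T b)))}"

(* delta and delta' define the same class in Ext^1_tau(Phi,Psi):
   their difference is an inner biderivation delta^(U) *)
definition ext_eq :: "nat \<Rightarrow> nat \<Rightarrow> 'k::field tmatrix \<Rightarrow> nat \<Rightarrow> 'k tmatrix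
                      \<Rightarrow> ('k poly \<Rightarrow> 'k tmatrix) \<Rightarrow> ('k poly \<Rightarrow> 'k tmatrix) \<Rightarrow> bool" where
  "ext_eq q d T e S \<delta> \<delta>' \<longleftrightarrow> (\<exists>U. tmat e d U \<and>
     (\<forall>a\<in>Aq q. msub (\<delta> a) (\<delta>' a) = msub (mmul q d U (tev q d T a)) (mmul q e (tev q e S a) U)))"

record 'a smod =
  scar :: "'a set"
  seqv :: "'a \<Rightarrow> 'a \<Rightarrow> bool"
  sadd :: "'a \<Rightarrow> 'a \<Rightarrow> 'a"
  szero :: "'a"

record ('a, 'r) ssmod = "'a smod" +
  sact :: "'r \<Rightarrow> 'a \<Rightarrow> 'a"

definition Hom_mod :: "nat \<Rightarrow> nat \<Rightarrow> 'k::field tmatrix \<Rightarrow> nat \<Rightarrow> 'k tmatrix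
                       \<Rightarrow> ('k tmatrix, 'k poly) ssmod" where
  "Hom_mod q e S d T = \<lparr> scar = Hom_tau q e S d T, seqv = (=), sadd = madd, szero = mzero,
                         sact = (\<lambda>a f. mmul q d (tev q d T a) f) \<rparr>"

(* Ext^1_tau(Phi,Psi) = Der / Der_in as F_q[t]-module: a * [delta] = [Psi_a delta] *)
definition Ext_mod :: "nat \<Rightarrow> nat \<Rightarrow> 'k::field tmatrix \<Rightarrow> nat \<Rightarrow> 'k tmatrix
                       \<Rightarrow> ('k poly \<Rightarrow> 'k tmatrix, 'k poly) ssmod" where
  "Ext_mod q d T e S = \<lparr> scar = Der q d T e S, seqv = ext_eq q d T e S,
                         sadd = (\<lambda>\<delta> \<delta>' a. madd (\<delta> a) (\<delta>' a)), szero = (\<lambda>a. mzero),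
                         sact = (\<lambda>a \<delta> b. mmul q e (tev q e S a) (\<delta> b)) \<rparr>"

definition smod_hom :: "'r set \<Rightarrow> ('a, 'r) ssmod \<Rightarrow> ('b, 'r) ssmod \<Rightarrow> ('a \<Rightarrow> 'b) \<Rightarrow> bool" where
  "smod_hom R M N f \<longleftrightarrow>
     (\<forall>x\<in>scar M. f x \<in> scar N) \<and>
     (\<forall>x\<in>scar M. \<forall>y\<in>scar M. seqv M x y \<longrightarrow> seqv N (f x) (f y)) \<and>
     (\<forall>x\<in>scar M. \<forall>y\<in>scar M. seqv N (f (sadd M x y)) (sadd N (f x) (f y))) \<and>
     (\<forall>a\<in>R. \<forall>x\<in>scar M. seqv N (f (sact M a x)) (sact N a (f x)))"

definition exact_at :: "('a, 'r) ssmod \<Rightarrow> ('b, 'r) ssmod \<Rightarrow> ('c, 'r) ssmod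
                        \<Rightarrow> ('a \<Rightarrow> 'b) \<Rightarrow> ('b \<Rightarrow> 'c) \<Rightarrow> bool" where
  "exact_at M N P f g \<longleftrightarrow>
     (\<forall>y\<in>scar N. seqv P (g y) (szero P) \<longleftrightarrow> (\<exists>x\<in>scar M. seqv N (f x) y))"

definition exact_inj :: "('a, 'r) ssmod \<Rightarrow> ('b, 'r) ssmod \<Rightarrow> ('a \<Rightarrow> 'b) \<Rightarrow> bool" where
  "exact_inj M N f \<longleftrightarrow> (\<forall>x\<in>scar M. seqv N (f x) (szero N) \<longrightarrow> seqv M x (szero M))"

definition exact_surj :: "('a, 'r) ssmod \<Rightarrow> ('b, 'r) ssmod \<Rightarrow> ('a \<Rightarrow> 'b) \<Rightarrow> bool" where
  "exact_surj M N f \<longleftrightarrow> (\<forall>z\<in>scar N. \<exists>y\<in>scar M. seqv N (f y) z)"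

definition exact6 :: "'r set \<Rightarrow> ('a1, 'r) ssmod \<Rightarrow> ('a2, 'r) ssmod \<Rightarrow> ('a3, 'r) ssmod
     \<Rightarrow> ('a4, 'r) ssmod \<Rightarrow> ('a5, 'r) ssmod \<Rightarrow> ('a6, 'r) ssmod
     \<Rightarrow> ('a1 \<Rightarrow> 'a2) \<Rightarrow> ('a2 \<Rightarrow> 'a3) \<Rightarrow> ('a3 \<Rightarrow> 'a4) \<Rightarrow> ('a4 \<Rightarrow> 'a5) \<Rightarrow> ('a5 \<Rightarrow> 'a6) \<Rightarrow> bool" where
  "exact6 R M1 M2 M3 M4 M5 M6 f1 f2 f3 f4 f5 \<longleftrightarrow>
     smod_hom R M1 M2 f1 \<and> smod_hom R M2 M3 f2 \<and> smod_hom R M3 M4 f3 \<and>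
     smod_hom R M4 M5 f4 \<and> smod_hom R M5 M6 f5 \<and>
     exact_inj M1 M2 f1 \<and> exact_at M1 M2 M3 f1 f2 \<and> exact_at M2 M3 M4 f2 f3 \<and>
     exact_at M3 M4 M5 f3 f4 \<and> exact_at M4 M5 M6 f4 f5 \<and> exact_surj M5 M6 f5"

(* block lower-triangular matrix [[P, 0], [B, C]] with P of size d x d *)
definition blk :: "nat \<Rightarrow> 'k::field tmatrix \<Rightarrow> 'k tmatrix \<Rightarrow> 'k tmatrix \<Rightarrow> 'k tmatrix" where
  "blk d P B C = (\<lambda>i j. if i < d then (if j < d then P i j else 0)
                        else (if j < d then B (i - d) j else C (i - d) (j - d)))"

(* i = [0; I_e], a (d+e) x e matrix *)
definition incl_mat :: "nat \<Rightarrow> nat \<Rightarrow> 'k::field tmatrix" where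
  "incl_mat d e = (\<lambda>i j. if d \<le> i \<and> i < d + e \<and> j = i - d then 1 else 0)"

(* pi = [I_d 0], a d x (d+e) matrix *)
definition proj_mat :: "nat \<Rightarrow> 'k::field tmatrix" where
  "proj_mat d = (\<lambda>i j. if i = j \<and> i < d then 1 else 0)"

definition ext_tmat :: "nat \<Rightarrow> 'k::field tmatrix \<Rightarrow> ('k poly \<Rightarrow> 'k tmatrix) \<Rightarrow> 'k tmatrix \<Rightarrow> 'k tmatrix" where
  "ext_tmat d T \<delta> S = blk d T (\<delta> [:0, 1:]) S"

end

theory Submission
  imports Defs "HOL-Library.Function_Algebras"
begin

(* Write delta^(U)(a) = U Phi_a - Psi_a U for the inner biderivation of a matrix U, and
   X_a = [[Phi_a, 0], [delta(a), Psi_a]].  Matrices into X are columns (f; U), matrices out of X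
   are rows (H K), and
     delta^((f; U))(a) = (delta^(f)(a); delta^(U)(a) - delta(a) f),
     delta^((H K))(a)  = (delta^(H)(a) + K delta(a)   delta^(K)(a)).
   So every exactness claim splits into a claim about the two blocks; e.g. (f; U) is a morphism
   G -> X iff f is a morphism G -> E and the biderivation delta o f is inner, namely delta^(U).
   At the Ext terms one first adds to a biderivation into (out of) X an inner biderivation that
   kills its upper (right) block; what remains is a biderivation into F (out of E).  The two
   sequences end surjectively because F_q[t] is generated by t: a biderivation is determined by its
   value at t, and every D is such a value, attained by the lower-left block of a |-> [[A, 0], [D, B]]_a. *)

section \<open>Matrices over the twisted polynomial ring\<close>

lemma matrix_group_ops:
  "madd A B = A + B" "msub A B = A - B" "mneg A = - A" "mzero = 0"
  by (simp_all add: madd_def msub_def mneg_def mzero_def fun_eq_iff)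

lemma tmat_zero [simp]: "tmat m n 0"
  by (simp add: tmat_def)

lemma tmat_add: "tmat m n A \<Longrightarrow> tmat m n B \<Longrightarrow> tmat m n (A + B)"
  by (simp add: tmat_def)

lemma tmat_diff: "tmat m n A \<Longrightarrow> tmat m n B \<Longrightarrow> tmat m n (A - B)"
  by (simp add: tmat_def)

lemma tmat_minus: "tmat m n A \<Longrightarrow> tmat m n (- A)"
  by (simp add: tmat_def)

lemma tmat_mone: "tmat n n (mone n)"
  by (simp add: tmat_def mone_def)

lemma mscal_zero [simp]: "mscal 0 A = 0"
  by (simp add: mscal_def fun_eq_iff)

lemma mscal_zero_right [simp]: "mscal c 0 = 0"
  by (simp add: mscal_def fun_eq_iff)

lemma mscal_add: "mscal c (A + B) = mscal c A + mscal c B"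
  and mscal_diff: "mscal c (A - B) = mscal c A - mscal c B"
  and mscal_minus: "mscal c (- A) = - mscal c A"
  by (simp_all add: mscal_def fun_eq_iff smult_add_right smult_diff_right)

lemma tmult_zero_left [simp]: "tmult q 0 g = 0"
  by (simp add: tmult_def)

lemma tmult_zero_right [simp]: "tmult q f 0 = 0"
  by (simp add: tmult_def)

lemma tmult_one_left [simp]: "tmult q 1 g = g"
  by (simp add: tmult_def monom_0 map_poly_idI)

lemma tmult_one_right [simp]: "tmult q f 1 = f"
proof -
  have "map_poly (\<lambda>c. c ^ q ^ i) 1 = (1 :: 'a poly)" for i
    by (simp add: map_poly_def one_pCons)
  then show ?thesis
    by (simp add: tmult_def poly_as_sum_of_monoms)
qed

lemma tmat_mmul: "tmat m k A \<Longrightarrow> tmat l n B \<Longrightarrow> tmat m n (mmul q k' A B)"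
  by (simp add: tmat_def mmul_def)

lemma mmul_zero_left [simp]: "mmul q n 0 B = 0"
  by (simp add: mmul_def fun_eq_iff)

lemma mmul_zero_right [simp]: "mmul q n A 0 = 0"
  by (simp add: mmul_def fun_eq_iff)

lemma mmul_mone_left:
  assumes "tmat n p B" shows "mmul q n (mone n) B = B"
proof -
  have "(\<Sum>k<n. tmult q (if i = k \<and> i < n then 1 else 0) (B k j)) = B i j" for i j
    using assms by (cases "i < n") (simp_all add: tmat_def if_distrib[of "\<lambda>x. tmult q x _"] cong: if_cong)
  then show ?thesis
    by (simp add: mmul_def mone_def fun_eq_iff)
qed

lemma mmul_mone_right:
  assumes "tmat m n A" shows "mmul q n A (mone n) = A"
proof -
  have "(\<Sum>k<n. tmult q (A i k) (if k = j \<and> k < n then 1 else 0)) = A i j" for i j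
    using assms by (cases "j < n") (simp_all add: tmat_def if_distrib[of "tmult q _"] cong: if_cong)
  then show ?thesis
    by (simp add: mmul_def mone_def fun_eq_iff)
qed

section \<open>Block matrices\<close>

lemma sum_lessThan_add_split: "(\<Sum>k<d + (e::nat). f k) = (\<Sum>k<d. f k) + (\<Sum>k<e. f (d + k))"
  by (induction e) (simp_all add: add.assoc)

definition vstack :: "nat \<Rightarrow> 'k::field tmatrix \<Rightarrow> 'k tmatrix \<Rightarrow> 'k tmatrix" where
  "vstack d A B = (\<lambda>i j. if i < d then A i j else B (i - d) j)"

definition hstack :: "nat \<Rightarrow> 'k::field tmatrix \<Rightarrow> 'k tmatrix \<Rightarrow> 'k tmatrix" where
  "hstack d A B = (\<lambda>i j. if j < d then A i j else B i (j - d))"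

definition upper_rows :: "nat \<Rightarrow> 'k::field tmatrix \<Rightarrow> 'k tmatrix" where
  "upper_rows d M = (\<lambda>i j. if i < d then M i j else 0)"

definition lower_rows :: "nat \<Rightarrow> 'k::field tmatrix \<Rightarrow> 'k tmatrix" where
  "lower_rows d M = (\<lambda>i j. M (d + i) j)"

definition left_cols :: "nat \<Rightarrow> 'k::field tmatrix \<Rightarrow> 'k tmatrix" where
  "left_cols d M = (\<lambda>i j. if j < d then M i j else 0)"

definition right_cols :: "nat \<Rightarrow> 'k::field tmatrix \<Rightarrow> 'k tmatrix" where
  "right_cols d M = (\<lambda>i j. M i (d + j))"

lemma vstack_add: "vstack d A B + vstack d A' B' = vstack d (A + A') (B + B')"
  and vstack_diff: "vstack d A B - vstack d A' B' = vstack d (A - A') (B - B')"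
  and vstack_zero: "vstack d 0 0 = 0"
  by (simp_all add: vstack_def fun_eq_iff)

lemma hstack_add: "hstack d A B + hstack d A' B' = hstack d (A + A') (B + B')"
  and hstack_diff: "hstack d A B - hstack d A' B' = hstack d (A - A') (B - B')"
  and hstack_minus: "- hstack d A B = hstack d (- A) (- B)"
  and hstack_zero: "hstack d 0 0 = 0"
  by (simp_all add: hstack_def fun_eq_iff)

lemma lower_rows_vstack [simp]: "lower_rows d (vstack d A B) = B"
  by (simp add: lower_rows_def vstack_def)

lemma right_cols_hstack [simp]: "right_cols d (hstack d A B) = B"
  by (simp add: right_cols_def hstack_def)

lemma upper_rows_vstack: "tmat d n A \<Longrightarrow> upper_rows d (vstack d A B) = A"
  by (auto simp: upper_rows_def vstack_def tmat_def fun_eq_iff)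

lemma left_cols_hstack: "tmat m d A \<Longrightarrow> left_cols d (hstack d A B) = A"
  by (auto simp: left_cols_def hstack_def tmat_def fun_eq_iff)

lemma lower_rows_add: "lower_rows d (M + N) = lower_rows d M + lower_rows d N"
  and lower_rows_mscal: "lower_rows d (mscal c M) = mscal c (lower_rows d M)"
  by (simp_all add: lower_rows_def mscal_def fun_eq_iff)

lemma left_cols_add: "left_cols d (M + N) = left_cols d M + left_cols d N"
  and left_cols_mscal: "left_cols d (mscal c M) = mscal c (left_cols d M)"
  by (simp_all add: left_cols_def mscal_def fun_eq_iff)

lemma lower_rows_mmul: "lower_rows d (mmul q n M N) = mmul q n (lower_rows d M) N"
  by (simp add: lower_rows_def mmul_def)

lemma left_cols_mmul: "left_cols d (mmul q n M N) = mmul q n M (left_cols d N)"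
  by (auto simp: left_cols_def mmul_def fun_eq_iff)

lemma tmat_vstack: "tmat d n A \<Longrightarrow> tmat e n B \<Longrightarrow> tmat (d + e) n (vstack d A B)"
  by (simp add: tmat_def vstack_def)

lemma tmat_hstack: "tmat m d A \<Longrightarrow> tmat m e B \<Longrightarrow> tmat m (d + e) (hstack d A B)"
  by (simp add: tmat_def hstack_def)

lemma tmat_lower_rows: "tmat (d + e) n M \<Longrightarrow> tmat e n (lower_rows d M)"
  by (simp add: tmat_def lower_rows_def)

lemma tmat_right_cols: "tmat m (d + e) M \<Longrightarrow> tmat m e (right_cols d M)"
  by (simp add: tmat_def right_cols_def)

lemma vstack_eq_iff:
  assumes "tmat d n A" "tmat d n A'"
  shows "vstack d A B = vstack d A' B' \<longleftrightarrow> A = A' \<and> B = B'"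
proof
  assume eq: "vstack d A B = vstack d A' B'"
  have "A i j = A' i j" for i j
    using assms fun_cong[OF fun_cong[OF eq, of i], of j]
    by (cases "i < d") (simp_all add: vstack_def tmat_def)
  then show "A = A' \<and> B = B'"
    using arg_cong[OF eq, of "lower_rows d"] by (simp add: fun_eq_iff)
qed simp

lemma hstack_eq_iff:
  assumes "tmat m d A" "tmat m d A'"
  shows "hstack d A B = hstack d A' B' \<longleftrightarrow> A = A' \<and> B = B'"
proof
  assume eq: "hstack d A B = hstack d A' B'"
  have "A i j = A' i j" for i j
    using assms fun_cong[OF fun_cong[OF eq, of i], of j]
    by (cases "j < d") (simp_all add: hstack_def tmat_def)
  then show "A = A' \<and> B = B'"
    using arg_cong[OF eq, of "right_cols d"] by (simp add: fun_eq_iff)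
qed simp

lemma vstack_upper_lower_rows: "vstack d (upper_rows d M) (lower_rows d M) = M"
  by (simp add: vstack_def upper_rows_def lower_rows_def fun_eq_iff)

lemma hstack_left_right_cols: "hstack d (left_cols d M) (right_cols d M) = M"
  by (simp add: hstack_def left_cols_def right_cols_def fun_eq_iff)

lemma tmat_upper_rows: "tmat m n M \<Longrightarrow> tmat d n (upper_rows d M)"
  by (simp add: tmat_def upper_rows_def)

lemma tmat_left_cols: "tmat m n M \<Longrightarrow> tmat m d (left_cols d M)"
  by (simp add: tmat_def left_cols_def)

lemma vstack_eq_0_iff: "tmat d n A \<Longrightarrow> vstack d A B = 0 \<longleftrightarrow> A = 0 \<and> B = 0"
  using vstack_eq_iff[of d n A 0 B 0] by (simp add: vstack_zero)

lemma hstack_eq_0_iff: "tmat m d A \<Longrightarrow> hstack d A B = 0 \<longleftrightarrow> A = 0 \<and> B = 0"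
  using hstack_eq_iff[of m d A 0 B 0] by (simp add: hstack_zero)

lemma vstack_cases:
  assumes "tmat (d + e) n M"
  obtains A B where "tmat d n A" "tmat e n B" "M = vstack d A B"
proof (rule that)
  show "tmat d n (upper_rows d M)" "tmat e n (lower_rows d M)"
    using assms by (rule tmat_upper_rows, rule tmat_lower_rows)
qed (simp add: vstack_upper_lower_rows)

lemma hstack_cases:
  assumes "tmat m (d + e) M"
  obtains A B where "tmat m d A" "tmat m e B" "M = hstack d A B"
proof (rule that)
  show "tmat m d (left_cols d M)" "tmat m e (right_cols d M)"
    using assms by (rule tmat_left_cols, rule tmat_right_cols)
qed (simp add: hstack_left_right_cols)

lemma mmul_hstack_vstack:
  "mmul q (d + e) (hstack d A B) (vstack d C D) = mmul q d A C + mmul q e B D"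
  by (simp add: mmul_def hstack_def vstack_def sum_lessThan_add_split fun_eq_iff)

lemma mmul_vstack_left: "mmul q n (vstack d A B) M = vstack d (mmul q n A M) (mmul q n B M)"
  by (simp add: mmul_def vstack_def fun_eq_iff)

lemma mmul_hstack_right: "mmul q n M (hstack d A B) = hstack d (mmul q n M A) (mmul q n M B)"
  by (simp add: mmul_def hstack_def fun_eq_iff)

lemma blk_eq_vstack: "blk d P B C = vstack d (hstack d P 0) (hstack d B C)"
  by (simp add: blk_def vstack_def hstack_def fun_eq_iff)

lemma tmat_blk: "tmat d d P \<Longrightarrow> tmat e d B \<Longrightarrow> tmat e e C \<Longrightarrow> tmat (d + e) (d + e) (blk d P B C)"
  by (simp add: blk_eq_vstack tmat_vstack tmat_hstack)

lemma blk_add: "blk d P B C + blk d P' B' C' = blk d (P + P') (B + B') (C + C')"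
  by (simp add: blk_eq_vstack vstack_add hstack_add)

lemma blk_zero: "blk d 0 0 0 = 0"
  by (simp add: blk_eq_vstack vstack_zero hstack_zero)

lemma mscal_blk: "mscal c (blk d P B C) = blk d (mscal c P) (mscal c B) (mscal c C)"
  by (simp add: blk_def mscal_def fun_eq_iff)

lemma mone_eq_blk: "mone (d + e) = blk d (mone d) 0 (mone e)"
  by (auto simp: blk_def mone_def fun_eq_iff)

lemma mmul_blk_vstack:
  "mmul q (d + e) (blk d P B C) (vstack d f U) = vstack d (mmul q d P f) (mmul q d B f + mmul q e C U)"
  by (simp add: blk_eq_vstack mmul_vstack_left mmul_hstack_vstack)

lemma mmul_hstack_blk:
  "mmul q (d + e) (hstack d H K) (blk d P B C) = hstack d (mmul q d H P + mmul q e K B) (mmul q e K C)"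
  by (simp add: blk_eq_vstack mmul_hstack_vstack mmul_hstack_right hstack_add)

lemma mmul_blk_blk:
  "mmul q (d + e) (blk d P B C) (blk d P' B' C') =
     blk d (mmul q d P P') (mmul q d B P' + mmul q e C B') (mmul q e C C')"
  by (simp add: blk_eq_vstack[of d P B C] mmul_vstack_left mmul_hstack_blk hstack_zero)
     (simp add: blk_eq_vstack)

definition lower_block :: "nat \<Rightarrow> nat \<Rightarrow> 'k::field tmatrix \<Rightarrow> 'k tmatrix" where
  "lower_block m n M = (\<lambda>i j. if i < n \<and> j < m then M (m + i) j else 0)"

lemma lower_block_blk: "tmat n m Q \<Longrightarrow> lower_block m n (blk m P Q R) = Q"
  by (auto simp: lower_block_def blk_def tmat_def fun_eq_iff)

lemma tmat_lower_block: "tmat n m (lower_block m n M)"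
  by (simp add: tmat_def lower_block_def)

lemma lower_block_add: "lower_block m n (M + N) = lower_block m n M + lower_block m n N"
  by (simp add: lower_block_def fun_eq_iff)

lemma lower_block_mscal: "lower_block m n (mscal c M) = mscal c (lower_block m n M)"
  by (simp add: lower_block_def mscal_def fun_eq_iff)

lemma incl_mat_eq_vstack: "incl_mat d e = vstack d 0 (mone e)"
  by (auto simp: incl_mat_def vstack_def mone_def fun_eq_iff)

lemma proj_mat_eq_hstack: "proj_mat d = hstack d (mone d) 0"
  by (auto simp: proj_mat_def hstack_def mone_def fun_eq_iff)

lemma tmat_incl_mat: "tmat (d + e) e (incl_mat d e)"
  by (simp add: incl_mat_eq_vstack tmat_vstack tmat_mone)

lemma tmat_proj_mat: "tmat d (d + e) (proj_mat d)"
  by (simp add: proj_mat_eq_hstack tmat_hstack tmat_mone)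

lemma mmul_incl_mat_left: "tmat e n f \<Longrightarrow> mmul q e (incl_mat d e) f = vstack d 0 f"
  by (simp add: incl_mat_eq_vstack mmul_vstack_left mmul_mone_left)

lemma mmul_proj_mat_vstack: "tmat d n f \<Longrightarrow> mmul q (d + e) (proj_mat d) (vstack d f U) = f"
  by (simp add: proj_mat_eq_hstack mmul_hstack_vstack mmul_mone_left)

lemma mmul_hstack_incl_mat: "tmat m e K \<Longrightarrow> mmul q (d + e) (hstack d H K) (incl_mat d e) = K"
  by (simp add: incl_mat_eq_vstack mmul_hstack_vstack mmul_mone_right)

lemma mmul_proj_mat_left:
  assumes "tmat (d + e) n M" shows "mmul q (d + e) (proj_mat d) M = upper_rows d M"
  using mmul_proj_mat_vstack[OF tmat_upper_rows[OF assms, where d = d],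
      where q = q and e = e and U = "lower_rows d M"]
  by (simp add: vstack_upper_lower_rows)

lemma mmul_incl_mat_right:
  assumes "tmat m (d + e) M" shows "mmul q (d + e) M (incl_mat d e) = right_cols d M"
  using mmul_hstack_incl_mat[OF tmat_right_cols[OF assms], where q = q and d = d and H = "left_cols d M"]
  by (simp add: hstack_left_right_cols)

lemma mmul_proj_mat_incl_mat: "mmul q (d + e) (proj_mat d) (incl_mat d e) = 0"
  by (simp add: incl_mat_eq_vstack mmul_proj_mat_vstack)

lemma mmul_proj_mat_right: "tmat m d h \<Longrightarrow> mmul q d h (proj_mat d) = hstack d h 0"
  by (simp add: proj_mat_eq_hstack mmul_hstack_right mmul_mone_right)

section \<open>The twisted polynomial ring and evaluation of t-module matrices\<close>

lemma smult_sum_right: "smult c (\<Sum>k\<in>K. F k) = (\<Sum>k\<in>K. smult c (F k))"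
  by (induction K rule: infinite_finite_induct) (simp_all add: smult_add_right)

(* Additivity of x |-> x ^ q is all that is needed: it makes twisted multiplication associative
   and lets the coefficients of elements of F_q[t] commute with tau. *)
locale twisted_poly_ring =
  fixes q :: nat and ty :: "'k::field itself"
  assumes q_pos: "0 < q" and power_q_add: "((x::'k) + y) ^ q = x ^ q + y ^ q"
begin

lemma power_q_power_add: "((x::'k) + y) ^ (q ^ i) = x ^ (q ^ i) + y ^ (q ^ i)"
proof (induction i)
  case (Suc i)
  have "(x + y) ^ (q ^ Suc i) = ((x + y) ^ (q ^ i)) ^ q"
    by (simp add: power_mult[symmetric] mult.commute)
  also have "\<dots> = (x ^ (q ^ i)) ^ q + (y ^ (q ^ i)) ^ q"
    using Suc power_q_add by simp
  finally show ?case
    by (simp add: power_mult[symmetric] mult.commute)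
qed simp

lemma zero_power_q_power [simp]: "(0::'k) ^ (q ^ i) = 0"
  using q_pos by simp

lemma power_q_power_fixed: "(c::'k) ^ q = c \<Longrightarrow> c ^ (q ^ i) = c"
  by (induction i) (simp_all add: power_mult)

definition twist :: "nat \<Rightarrow> 'k poly \<Rightarrow> 'k poly" where
  "twist i g = map_poly (\<lambda>c. c ^ (q ^ i)) g"

lemma coeff_twist: "coeff (twist i g) k = coeff g k ^ (q ^ i)"
  by (simp add: twist_def coeff_map_poly)

lemma twist_add: "twist i (f + g) = twist i f + twist i g"
  by (rule poly_eqI) (simp add: coeff_twist power_q_power_add)

lemma twist_monom: "twist i (monom b j) = monom (b ^ (q ^ i)) j"
  by (rule poly_eqI) (simp add: coeff_twist coeff_monom)

lemma twist_smult: "twist i (smult c g) = smult (c ^ (q ^ i)) (twist i g)"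
  by (rule poly_eqI) (simp add: coeff_twist power_mult_distrib)

lemma tmult_eq_sum: "tmult q f g = (\<Sum>i\<le>degree f. monom (coeff f i) i * twist i g)"
  unfolding tmult_def twist_def ..

lemma tmult_eq_sum_bound:
  assumes "degree f \<le> N"
  shows "tmult q f g = (\<Sum>i\<le>N. monom (coeff f i) i * twist i g)"
  unfolding tmult_eq_sum
  by (rule sum.mono_neutral_left) (use assms in \<open>auto intro!: coeff_eq_0\<close>)

lemma tmult_add_left: "tmult q (f + g) (h::'k poly) = tmult q f h + tmult q g h"
proof -
  define N where "N = max (degree f) (degree g)"
  have "tmult q (f + g) h = (\<Sum>i\<le>N. monom (coeff (f + g) i) i * twist i h)"
    by (rule tmult_eq_sum_bound) (simp add: N_def degree_add_le_max)
  also have "\<dots> = (\<Sum>i\<le>N. monom (coeff f i) i * twist i h) + (\<Sum>i\<le>N. monom (coeff g i) i * twist i h)"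
    by (simp add: add_monom[symmetric] distrib_right sum.distrib)
  also have "\<dots> = tmult q f h + tmult q g h"
    by (simp add: tmult_eq_sum_bound[symmetric] N_def)
  finally show ?thesis .
qed

lemma tmult_add_right: "tmult q (f::'k poly) (g + h) = tmult q f g + tmult q f h"
  by (simp add: tmult_eq_sum twist_add distrib_left sum.distrib)

lemma tmult_minus_left: "tmult q (- f) (g::'k poly) = - tmult q f g"
  using tmult_add_left[of "- f" f g] by (simp add: eq_neg_iff_add_eq_0)

lemma tmult_minus_right: "tmult q (f::'k poly) (- g) = - tmult q f g"
  using tmult_add_right[of f "- g" g] by (simp add: eq_neg_iff_add_eq_0)

lemma tmult_diff_left: "tmult q (f - g) (h::'k poly) = tmult q f h - tmult q g h"
  using tmult_add_left[of f "- g" h] by (simp add: tmult_minus_left)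

lemma tmult_diff_right: "tmult q (f::'k poly) (g - h) = tmult q f g - tmult q f h"
  using tmult_add_right[of f g "- h"] by (simp add: tmult_minus_right)

lemma tmult_sum_left: "tmult q (\<Sum>k\<in>I. F k) (g::'k poly) = (\<Sum>k\<in>I. tmult q (F k) g)"
  by (induction I rule: infinite_finite_induct) (simp_all add: tmult_add_left)

lemma tmult_sum_right: "tmult q (f::'k poly) (\<Sum>k\<in>I. F k) = (\<Sum>k\<in>I. tmult q f (F k))"
  by (induction I rule: infinite_finite_induct) (simp_all add: tmult_add_right)

lemma tmult_monom_left: "tmult q (monom a i) g = monom a i * twist i g"
proof -
  have "tmult q (monom a i) g = (\<Sum>k\<le>i. monom (coeff (monom a i) k) k * twist k g)"
    by (rule tmult_eq_sum_bound) (simp add: degree_monom_le)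
  also have "\<dots> = (\<Sum>k\<le>i. if k = i then monom a i * twist i g else 0)"
    by (rule sum.cong) (auto simp: coeff_monom)
  finally show ?thesis by simp
qed

lemma tmult_monom_monom: "tmult q (monom (a::'k) i) (monom b j) = monom (a * b ^ (q ^ i)) (i + j)"
  by (simp add: tmult_monom_left twist_monom mult_monom)

lemma tmult_assoc: "tmult q (tmult q f g) (h::'k poly) = tmult q f (tmult q g h)"
proof -
  have monoms: "tmult q (tmult q (monom (a::'k) i) (monom b j)) (monom c k) =
                tmult q (monom a i) (tmult q (monom b j) (monom c k))" for a b c i j k
    by (simp add: tmult_monom_monom power_mult_distrib power_add power_mult[symmetric]
        mult.assoc mult.commute[of "q ^ j" "q ^ i"] add.assoc)
  let ?f = "\<lambda>i. monom (coeff f i) i" and ?g = "\<lambda>i. monom (coeff g i) i"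
    and ?h = "\<lambda>i. monom (coeff h i) i"
  have "tmult q (tmult q (\<Sum>i\<le>degree f. ?f i) (\<Sum>i\<le>degree g. ?g i)) (\<Sum>i\<le>degree h. ?h i) =
        tmult q (\<Sum>i\<le>degree f. ?f i) (tmult q (\<Sum>i\<le>degree g. ?g i) (\<Sum>i\<le>degree h. ?h i))"
    by (simp add: tmult_sum_left tmult_sum_right monoms)
  then show ?thesis
    by (simp add: poly_as_sum_of_monoms)
qed

lemma tmult_smult_left: "tmult q (smult c f) (g::'k poly) = smult c (tmult q f g)"
proof -
  have "tmult q (smult c f) g = (\<Sum>i\<le>degree f. monom (coeff (smult c f) i) i * twist i g)"
    by (rule tmult_eq_sum_bound) simp
  then show ?thesis
    by (simp add: tmult_eq_sum smult_sum_right smult_monom[symmetric])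
qed

lemma tmult_smult_right: "(c::'k) ^ q = c \<Longrightarrow> tmult q f (smult c g) = smult c (tmult q f g)"
  by (simp add: tmult_eq_sum twist_smult power_q_power_fixed smult_sum_right)

lemma mmul_assoc: "mmul q n (mmul q m A B) C = mmul q m (A::'k tmatrix) (mmul q n B C)"
  unfolding mmul_def
  by (simp add: tmult_sum_left tmult_sum_right tmult_assoc fun_eq_iff, intro allI, rule sum.swap)

lemma mmul_add_left: "mmul q n (A + B) C = mmul q n A C + mmul q n (B::'k tmatrix) C"
  by (simp add: mmul_def tmult_add_left sum.distrib fun_eq_iff)

lemma mmul_add_right: "mmul q n (C::'k tmatrix) (A + B) = mmul q n C A + mmul q n C B"
  by (simp add: mmul_def tmult_add_right sum.distrib fun_eq_iff)

lemma mmul_diff_left: "mmul q n (A - B) C = mmul q n A C - mmul q n (B::'k tmatrix) C"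
  by (simp add: mmul_def tmult_diff_left sum_subtractf fun_eq_iff)

lemma mmul_diff_right: "mmul q n (C::'k tmatrix) (A - B) = mmul q n C A - mmul q n C B"
  by (simp add: mmul_def tmult_diff_right sum_subtractf fun_eq_iff)

lemma mmul_minus_left: "mmul q n (- A) (C::'k tmatrix) = - mmul q n A C"
  by (simp add: mmul_def tmult_minus_left sum_negf fun_eq_iff)

lemma mmul_minus_right: "mmul q n (C::'k tmatrix) (- A) = - mmul q n C A"
  by (simp add: mmul_def tmult_minus_right sum_negf fun_eq_iff)

lemma mmul_mscal_left: "mmul q n (mscal c A) (B::'k tmatrix) = mscal c (mmul q n A B)"
  by (simp add: mmul_def mscal_def tmult_smult_left smult_sum_right fun_eq_iff)

lemma mmul_mscal_right: "c ^ q = c \<Longrightarrow> mmul q n (A::'k tmatrix) (mscal c B) = mscal c (mmul q n A B)"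
  by (simp add: mmul_def mscal_def tmult_smult_right smult_sum_right fun_eq_iff)

lemma mmul_sum_left:
  "mmul q n (\<lambda>i j. \<Sum>k\<in>I. F k i j) (B::'k tmatrix) = (\<lambda>i j. \<Sum>k\<in>I. mmul q n (F k) B i j)"
  unfolding mmul_def by (simp add: tmult_sum_left fun_eq_iff, intro allI, rule sum.swap)

lemma mmul_sum_right:
  "mmul q n (B::'k tmatrix) (\<lambda>i j. \<Sum>k\<in>I. F k i j) = (\<lambda>i j. \<Sum>k\<in>I. mmul q n B (F k) i j)"
  unfolding mmul_def by (simp add: tmult_sum_right fun_eq_iff, intro allI, rule sum.swap)

lemmas mmul_distribs =
  mmul_add_left mmul_add_right mmul_diff_left mmul_diff_right mmul_minus_left mmul_minus_right

lemma Fq_zero: "(0::'k) \<in> Fq q" and Fq_one: "(1::'k) \<in> Fq q"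
  using q_pos by (simp_all add: Fq_def)

lemma Aq_pCons_iff: "pCons c a \<in> Aq q \<longleftrightarrow> c \<in> Fq q \<and> (a::'k poly) \<in> Aq q"
  unfolding Aq_def by (auto simp: coeff_pCons split: nat.splits)

lemma Aq_zero: "(0::'k poly) \<in> Aq q"
  by (simp add: Aq_def Fq_zero)

lemma Aq_const: "(c::'k) \<in> Fq q \<Longrightarrow> [:c:] \<in> Aq q"
  by (simp add: Aq_pCons_iff Aq_zero)

lemma Aq_one: "(1::'k poly) \<in> Aq q"
  using Aq_const[OF Fq_one] by (simp add: one_pCons)

lemma Aq_t: "[:0, 1::'k:] \<in> Aq q"
  by (simp add: Aq_pCons_iff Aq_zero Fq_zero Fq_one)

lemma Aq_coeff_power_q: "a \<in> Aq q \<Longrightarrow> coeff a k ^ q = coeff a k"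
  by (simp add: Aq_def Fq_def)

lemma tev_bound:
  assumes "degree a \<le> N"
  shows "tev q n M a = (\<lambda>i j. \<Sum>k\<le>N. smult (coeff a k) (mpow q n M k i j))"
  unfolding tev_def
  by (intro ext sum.mono_neutral_left) (use assms in \<open>auto intro!: coeff_eq_0\<close>)

lemma tev_add: "tev q n M (a + b) = tev q n M a + tev q n (M::'k tmatrix) b"
proof -
  define N where "N = max (degree a) (degree b)"
  have "tev q n M (a + b) = (\<lambda>i j. \<Sum>k\<le>N. smult (coeff (a + b) k) (mpow q n M k i j))"
    by (rule tev_bound) (simp add: N_def degree_add_le_max)
  also have "\<dots> = (\<lambda>i j. \<Sum>k\<le>N. smult (coeff a k) (mpow q n M k i j))
                  + (\<lambda>i j. \<Sum>k\<le>N. smult (coeff b k) (mpow q n M k i j))"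
    by (simp add: smult_add_left sum.distrib fun_eq_iff)
  also have "\<dots> = tev q n M a + tev q n M b"
    by (subst (1 2) tev_bound[where N = N]) (auto simp: N_def)
  finally show ?thesis .
qed

lemma tev_smult: "tev q n (M::'k tmatrix) (smult c a) = mscal c (tev q n M a)"
proof -
  have "tev q n M (smult c a) = (\<lambda>i j. \<Sum>k\<le>degree a. smult (coeff (smult c a) k) (mpow q n M k i j))"
    by (rule tev_bound) simp
  then show ?thesis
    by (simp add: mscal_def tev_def smult_sum_right)
qed

lemma tev_zero [simp]: "tev q n M 0 = 0"
  by (simp add: tev_def fun_eq_iff)

lemma tev_one: "tev q n M 1 = mone n"
  by (simp add: tev_def fun_eq_iff)

lemma tev_const: "tev q n M [:c:] = mscal c (mone n)"
  by (simp add: tev_def mscal_def)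

lemma tmat_mpow: "tmat n n (M::'k tmatrix) \<Longrightarrow> tmat n n (mpow q n M k)"
  by (induction k) (simp_all add: tmat_mone tmat_mmul)

lemma tmat_tev: "tmat n n (M::'k tmatrix) \<Longrightarrow> tmat n n (tev q n M a)"
  using tmat_mpow by (simp add: tev_def tmat_def)

lemma mpow_Suc_right: "tmat n n M \<Longrightarrow> mpow q n M (Suc k) = mmul q n (mpow q n (M::'k tmatrix) k) M"
proof (induction k)
  case (Suc k)
  then have "mpow q n M (Suc (Suc k)) = mmul q n M (mmul q n (mpow q n M k) M)"
    by simp
  then show ?case
    by (simp add: mmul_assoc)
qed (simp add: mmul_mone_left mmul_mone_right)

lemma tev_pCons:
  assumes "tmat n n (M::'k tmatrix)"
  shows "tev q n M (pCons c a) = mscal c (mone n) + mmul q n (tev q n M a) M"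
proof -
  have "tev q n M (pCons c a) =
      (\<lambda>i j. \<Sum>k\<le>Suc (degree a). smult (coeff (pCons c a) k) (mpow q n M k i j))"
    by (rule tev_bound) (simp add: degree_pCons_le)
  also have "\<dots> = mscal c (mone n) + (\<lambda>i j. \<Sum>k\<le>degree a. smult (coeff a k) (mpow q n M (Suc k) i j))"
    by (subst sum.atMost_Suc_shift) (simp add: mscal_def fun_eq_iff del: sum.atMost_Suc mpow.simps(2))
  also have "(\<lambda>i j. \<Sum>k\<le>degree a. smult (coeff a k) (mpow q n M (Suc k) i j)) =
      (\<lambda>i j. \<Sum>k\<le>degree a. mmul q n (mscal (coeff a k) (mpow q n M k)) M i j)"
    by (simp add: mpow_Suc_right[OF assms] mmul_mscal_left del: mpow.simps(2)) (simp add: mscal_def)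
  also have "\<dots> = mmul q n (tev q n M a) M"
    unfolding tev_def mmul_sum_left[symmetric] mscal_def ..
  finally show ?thesis .
qed

lemma tev_t: "tmat n n (M::'k tmatrix) \<Longrightarrow> tev q n M [:0, 1:] = M"
  using tev_pCons[of n M 0 1] by (simp add: tev_const mmul_mone_left one_pCons mscal_def fun_eq_iff)

lemma mpow_commute:
  assumes "tmat m n f" "mmul q n f B = mmul q m (A::'k tmatrix) f"
  shows "mmul q n f (mpow q n B k) = mmul q m (mpow q m A k) f"
proof (induction k)
  case 0
  then show ?case using assms(1) by (simp add: mmul_mone_left mmul_mone_right)
next
  case (Suc k)
  have "mmul q n f (mpow q n B (Suc k)) = mmul q n (mmul q n f B) (mpow q n B k)"
    by (simp add: mmul_assoc)
  also have "\<dots> = mmul q m (mpow q m A (Suc k)) f"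
    by (simp add: assms(2) mmul_assoc Suc)
  finally show ?case .
qed

lemma tev_commute:
  assumes "tmat m n f" "mmul q n f B = mmul q m (A::'k tmatrix) f" "a \<in> Aq q"
  shows "mmul q n f (tev q n B a) = mmul q m (tev q m A a) f"
proof -
  have "mmul q n f (tev q n B a) = (\<lambda>i j. \<Sum>k\<le>degree a. mmul q n f (mscal (coeff a k) (mpow q n B k)) i j)"
    unfolding tev_def mmul_sum_right[symmetric] mscal_def ..
  also have "\<dots> = (\<lambda>i j. \<Sum>k\<le>degree a. mmul q m (mscal (coeff a k) (mpow q m A k)) f i j)"
    by (simp add: mmul_mscal_right mmul_mscal_left Aq_coeff_power_q[OF assms(3)] mpow_commute[OF assms(1,2)])
  also have "\<dots> = mmul q m (tev q m A a) f"
    unfolding tev_def mmul_sum_left[symmetric] mscal_def ..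
  finally show ?thesis .
qed

lemma tev_mult:
  assumes M: "tmat n n (M::'k tmatrix)" and b: "b \<in> Aq q"
  shows "tev q n M (a * b) = mmul q n (tev q n M a) (tev q n M b)"
proof (induction a)
  case (pCons c a)
  have comm: "mmul q n M (tev q n M b) = mmul q n (tev q n M b) M"
    by (rule tev_commute[OF M refl b])
  have "pCons c a * b = smult c b + pCons 0 (a * b)"
    by simp
  then have "tev q n M (pCons c a * b) = mscal c (tev q n M b) + mmul q n (tev q n M (a * b)) M"
    using tev_pCons[OF M, of 0 "a * b"] by (simp add: tev_add tev_smult tev_const)
  also have "\<dots> = mmul q n (mscal c (mone n) + mmul q n (tev q n M a) M) (tev q n M b)"
    by (simp add: pCons.IH mmul_add_left mmul_mscal_left mmul_mone_left[OF tmat_tev[OF M]] mmul_assoc comm)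
  finally show ?case
    by (simp only: tev_pCons[OF M])
qed (simp only: mult_zero_left tev_zero mmul_zero_left)

lemma tev_blk_lower_triangular:
  assumes "tmat m m (A::'k tmatrix)" "tmat n m D" "tmat n n B"
  shows "\<exists>Q. tmat n m Q \<and> tev q (m + n) (blk m A D B) a = blk m (tev q m A a) Q (tev q n B a)"
proof (induction a)
  case 0
  show ?case
    by (intro exI[of _ 0]) (simp only: tev_zero blk_zero tmat_zero simp_thms)
next
  case (pCons c a)
  then obtain Q where Q: "tmat n m Q" and IH: "tev q (m + n) (blk m A D B) a = blk m (tev q m A a) Q (tev q n B a)"
    by blast
  have "tev q (m + n) (blk m A D B) (pCons c a) =
      blk m (tev q m A (pCons c a)) (mmul q m Q A + mmul q n (tev q n B a) D) (tev q n B (pCons c a))"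
    by (simp add: tev_pCons tmat_blk assms IH mmul_blk_blk mone_eq_blk mscal_blk blk_add)
  moreover have "tmat n m (mmul q m Q A + mmul q n (tev q n B a) D)"
    using Q assms tmat_tev[OF assms(3)] by (intro tmat_add tmat_mmul)
  ultimately show ?case
    by blast
qed

lemma tev_blk:
  assumes "tmat m m (A::'k tmatrix)" "tmat n m D" "tmat n n B"
  shows "tev q (m + n) (blk m A D B) a =
           blk m (tev q m A a) (lower_block m n (tev q (m + n) (blk m A D B) a)) (tev q n B a)"
proof -
  obtain Q where "tmat n m Q" and "tev q (m + n) (blk m A D B) a = blk m (tev q m A a) Q (tev q n B a)"
    using tev_blk_lower_triangular[OF assms, of a] by blast
  then show ?thesis
    by (simp add: lower_block_blk)
qed

end

section \<open>Biderivations\<close>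

definition inner_der ::
    "nat \<Rightarrow> nat \<Rightarrow> 'k::field tmatrix \<Rightarrow> nat \<Rightarrow> 'k tmatrix \<Rightarrow> 'k tmatrix \<Rightarrow> 'k poly \<Rightarrow> 'k tmatrix" where
  "inner_der q m A n B U a = mmul q m U (tev q m A a) - mmul q n (tev q n B a) U"

lemma inner_der_zero [simp]: "inner_der q m A n B 0 a = 0"
  by (simp add: inner_der_def)

lemma ext_eq_iff_inner_der:
  "ext_eq q m A n B \<delta> \<delta>' \<longleftrightarrow> (\<exists>U. tmat n m U \<and> (\<forall>a\<in>Aq q. \<delta> a - \<delta>' a = inner_der q m A n B U a))"
  by (simp add: ext_eq_def inner_der_def matrix_group_ops)

lemma ext_eq_on_Aq: "(\<And>a. a \<in> Aq q \<Longrightarrow> \<delta> a = \<delta>' a) \<Longrightarrow> ext_eq q m A n B \<delta> \<delta>'"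
  by (auto simp: ext_eq_iff_inner_der inner_der_def intro!: exI[of _ 0])

lemma Der_iff:
  "\<delta> \<in> Der q m A n B \<longleftrightarrow>
     (\<forall>a\<in>Aq q. tmat n m (\<delta> a)) \<and>
     (\<forall>a\<in>Aq q. \<forall>b\<in>Aq q. \<delta> (a + b) = \<delta> a + \<delta> b) \<and>
     (\<forall>c\<in>Fq q. \<forall>a\<in>Aq q. \<delta> (smult c a) = mscal c (\<delta> a)) \<and>
     (\<forall>a\<in>Aq q. \<forall>b\<in>Aq q. \<delta> (a * b) = mmul q n (tev q n B a) (\<delta> b) + mmul q m (\<delta> a) (tev q m A b))"
  by (simp add: Der_def matrix_group_ops)

lemma DerI:
  assumes "\<And>a. a \<in> Aq q \<Longrightarrow> tmat n m (\<delta> a)"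
    and "\<And>a b. a \<in> Aq q \<Longrightarrow> b \<in> Aq q \<Longrightarrow> \<delta> (a + b) = \<delta> a + \<delta> b"
    and "\<And>c a. c \<in> Fq q \<Longrightarrow> a \<in> Aq q \<Longrightarrow> \<delta> (smult c a) = mscal c (\<delta> a)"
    and "\<And>a b. a \<in> Aq q \<Longrightarrow> b \<in> Aq q \<Longrightarrow>
           \<delta> (a * b) = mmul q n (tev q n B a) (\<delta> b) + mmul q m (\<delta> a) (tev q m A b)"
  shows "\<delta> \<in> Der q m A n B"
  using assms by (simp add: Der_iff)

lemma Der_tmat: "\<delta> \<in> Der q m A n B \<Longrightarrow> a \<in> Aq q \<Longrightarrow> tmat n m (\<delta> a)"
  by (simp add: Der_iff)

lemma Der_add: "\<delta> \<in> Der q m A n B \<Longrightarrow> a \<in> Aq q \<Longrightarrow> b \<in> Aq q \<Longrightarrow> \<delta> (a + b) = \<delta> a + \<delta> b"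
  by (simp add: Der_iff)

lemma Der_smult: "\<delta> \<in> Der q m A n B \<Longrightarrow> c \<in> Fq q \<Longrightarrow> a \<in> Aq q \<Longrightarrow> \<delta> (smult c a) = mscal c (\<delta> a)"
  by (simp add: Der_iff)

lemma Der_mult:
  "\<delta> \<in> Der q m A n B \<Longrightarrow> a \<in> Aq q \<Longrightarrow> b \<in> Aq q \<Longrightarrow>
     \<delta> (a * b) = mmul q n (tev q n B a) (\<delta> b) + mmul q m (\<delta> a) (tev q m A b)"
  by (simp add: Der_iff)

context twisted_poly_ring
begin

lemma Der_zero_poly:
  assumes \<delta>: "\<delta> \<in> Der q m (A::'k tmatrix) n B" shows "\<delta> 0 = 0"
  using Der_add[OF \<delta> Aq_zero Aq_zero] by simp

lemma Der_one:
  assumes \<delta>: "\<delta> \<in> Der q m (A::'k tmatrix) n B" shows "\<delta> 1 = 0"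
  using Der_mult[OF \<delta> Aq_one Aq_one] Der_tmat[OF \<delta> Aq_one]
  by (simp add: tev_one mmul_mone_left mmul_mone_right)

lemma Der_const:
  assumes \<delta>: "\<delta> \<in> Der q m (A::'k tmatrix) n B" and c: "c \<in> Fq q" shows "\<delta> [:c:] = 0"
  using Der_smult[OF \<delta> c Aq_one] by (simp add: Der_one[OF \<delta>] smult_one)

lemma Der_eqI:
  assumes \<delta>: "\<delta> \<in> Der q m (A::'k tmatrix) n B" and \<delta>': "\<delta>' \<in> Der q m A n B"
    and t: "\<delta> [:0, 1:] = \<delta>' [:0, 1:]" and a: "a \<in> Aq q"
  shows "\<delta> a = \<delta>' a"
  using a
proof (induction a)
  case (pCons c a)
  then have c: "c \<in> Fq q" and a: "a \<in> Aq q"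
    by (simp_all add: Aq_pCons_iff)
  have at: "a * [:0, 1:] \<in> Aq q"
    using a by (simp add: Aq_pCons_iff Fq_zero)
  have step: "\<xi> ([:c:] + a * [:0, 1:]) =
      mmul q n (tev q n B a) (\<xi> [:0, 1:]) + mmul q m (\<xi> a) (tev q m A [:0, 1:])"
    if \<xi>: "\<xi> \<in> Der q m A n B" for \<xi>
    by (simp only: Der_add[OF \<xi> Aq_const[OF c] at] Der_const[OF \<xi> c] Der_mult[OF \<xi> a Aq_t] add_0_left)
  have "pCons c a = [:c:] + a * [:0, 1:]"
    by simp
  then show ?case
    by (simp only: step[OF \<delta>] step[OF \<delta>'] t pCons.IH[OF a])
qed (simp only: Der_zero_poly[OF \<delta>] Der_zero_poly[OF \<delta>'])

lemma Der_lower_block: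
  assumes A: "tmat m m (A::'k tmatrix)" and D: "tmat n m D" and B: "tmat n n B"
  shows "(\<lambda>a. lower_block m n (tev q (m + n) (blk m A D B) a)) \<in> Der q m A n B"
proof (rule DerI)
  let ?M = "blk m A D B"
  fix a b :: "'k poly" assume b: "b \<in> Aq q"
  define La Lb where "La = lower_block m n (tev q (m + n) ?M a)" and "Lb = lower_block m n (tev q (m + n) ?M b)"
  have L: "tmat n m (mmul q m La (tev q m A b) + mmul q n (tev q n B a) Lb)"
    using tmat_tev[OF A] tmat_tev[OF B] tmat_lower_block unfolding La_def Lb_def
    by (intro tmat_add tmat_mmul)
  have "lower_block m n (tev q (m + n) ?M (a * b)) =
      lower_block m n (mmul q (m + n) (tev q (m + n) ?M a) (tev q (m + n) ?M b))"
    by (simp only: tev_mult[OF tmat_blk[OF A D B] b])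
  also have "tev q (m + n) ?M a = blk m (tev q m A a) La (tev q n B a)"
    unfolding La_def by (rule tev_blk[OF A D B])
  also have "tev q (m + n) ?M b = blk m (tev q m A b) Lb (tev q n B b)"
    unfolding Lb_def by (rule tev_blk[OF A D B])
  also have "lower_block m n (mmul q (m + n) (blk m (tev q m A a) La (tev q n B a)) (blk m (tev q m A b) Lb (tev q n B b)))
      = mmul q m La (tev q m A b) + mmul q n (tev q n B a) Lb"
    by (simp only: mmul_blk_blk lower_block_blk[OF L])
  finally show "lower_block m n (tev q (m + n) ?M (a * b)) =
      mmul q n (tev q n B a) (lower_block m n (tev q (m + n) ?M b)) +
      mmul q m (lower_block m n (tev q (m + n) ?M a)) (tev q m A b)"
    by (simp only: La_def Lb_def add.commute)
qed (simp_all add: tmat_lower_block tev_add tev_smult lower_block_add lower_block_mscal)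

lemma Der_lower_block_t:
  assumes "tmat m m (A::'k tmatrix)" "tmat n m D" "tmat n n B"
  shows "lower_block m n (tev q (m + n) (blk m A D B) [:0, 1:]) = D"
  using assms by (simp add: tev_t tmat_blk lower_block_blk)

lemma Der_exists:
  assumes "tmat m m (A::'k tmatrix)" "tmat n m D" "tmat n n B"
  shows "\<exists>\<delta>\<in>Der q m A n B. \<delta> [:0, 1:] = D"
proof
  show "(\<lambda>a. lower_block m n (tev q (m + n) (blk m A D B) a)) \<in> Der q m A n B"
    by (rule Der_lower_block[OF assms])
qed (simp only: Der_lower_block_t[OF assms])

lemma tev_ext_tmat:
  assumes \<delta>: "\<delta> \<in> Der q d (T::'k tmatrix) e S" and T: "tmat d d T" and S: "tmat e e S"
    and a: "a \<in> Aq q"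
  shows "tev q (d + e) (ext_tmat d T \<delta> S) a = blk d (tev q d T a) (\<delta> a) (tev q e S a)"
proof -
  have D: "tmat e d (\<delta> [:0, 1:])"
    using Der_tmat[OF \<delta> Aq_t] .
  have "tev q (d + e) (ext_tmat d T \<delta> S) a =
      blk d (tev q d T a) (lower_block d e (tev q (d + e) (blk d T (\<delta> [:0, 1:]) S) a)) (tev q e S a)"
    unfolding ext_tmat_def by (rule tev_blk[OF T D S])
  also have "lower_block d e (tev q (d + e) (blk d T (\<delta> [:0, 1:]) S) a) = \<delta> a"
    by (rule Der_eqI[OF Der_lower_block[OF T D S] \<delta> Der_lower_block_t[OF T D S] a])
  finally show ?thesis .
qed

lemma Der_uminus_closed:
  assumes \<delta>: "\<delta> \<in> Der q m (A::'k tmatrix) n B"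
  shows "(\<lambda>a. - \<delta> a) \<in> Der q m A n B"
  by (rule DerI) (simp_all add: Der_tmat[OF \<delta>] tmat_minus Der_add[OF \<delta>] Der_smult[OF \<delta>] mscal_minus
      Der_mult[OF \<delta>] mmul_minus_left mmul_minus_right)

lemma Der_plus_closed:
  assumes \<delta>: "\<delta> \<in> Der q m (A::'k tmatrix) n B" and \<delta>': "\<delta>' \<in> Der q m A n B"
  shows "(\<lambda>a. \<delta> a + \<delta>' a) \<in> Der q m A n B"
  by (rule DerI) (simp_all add: Der_tmat[OF \<delta>] Der_tmat[OF \<delta>'] tmat_add Der_add[OF \<delta>] Der_add[OF \<delta>']
      Der_smult[OF \<delta>] Der_smult[OF \<delta>'] mscal_add Der_mult[OF \<delta>] Der_mult[OF \<delta>'] mmul_add_left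
      mmul_add_right)

lemma tmat_inner_der:
  "tmat n m U \<Longrightarrow> tmat m m (A::'k tmatrix) \<Longrightarrow> tmat n n B \<Longrightarrow> tmat n m (inner_der q m A n B U a)"
  unfolding inner_der_def using tmat_tev[of m A] tmat_tev[of n B] by (intro tmat_diff tmat_mmul) auto

lemma inner_der_in_Der:
  assumes U: "tmat n m U" and A: "tmat m m (A::'k tmatrix)" and B: "tmat n n B"
  shows "inner_der q m A n B U \<in> Der q m A n B"
proof (rule DerI)
  show "tmat n m (inner_der q m A n B U a)" for a
    by (rule tmat_inner_der[OF U A B])
next
  fix a b :: "'k poly" assume b: "b \<in> Aq q"
  show "inner_der q m A n B U (a * b) =
      mmul q n (tev q n B a) (inner_der q m A n B U b) + mmul q m (inner_der q m A n B U a) (tev q m A b)"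
    by (simp add: inner_der_def tev_mult[OF A b] tev_mult[OF B b] mmul_distribs mmul_assoc)
next
  fix c :: 'k and a :: "'k poly" assume "c \<in> Fq q"
  then show "inner_der q m A n B U (smult c a) = mscal c (inner_der q m A n B U a)"
    by (simp add: inner_der_def tev_smult mmul_mscal_left mmul_mscal_right mscal_diff Fq_def)
qed (simp add: inner_der_def tev_add mmul_distribs)

lemma Der_mmul_left_closed:
  assumes \<delta>: "\<delta> \<in> Der q m (A::'k tmatrix) n B" and k: "tmat p n k" "mmul q n k B = mmul q p C k"
  shows "(\<lambda>a. mmul q n k (\<delta> a)) \<in> Der q m A p C"
proof (rule DerI)
  show "tmat p m (mmul q n k (\<delta> a))" if "a \<in> Aq q" for a
    using tmat_mmul[OF k(1) Der_tmat[OF \<delta> that]] .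
next
  fix a b :: "'k poly" assume "a \<in> Aq q" "b \<in> Aq q"
  then show "mmul q n k (\<delta> (a * b)) =
      mmul q p (tev q p C a) (mmul q n k (\<delta> b)) + mmul q m (mmul q n k (\<delta> a)) (tev q m A b)"
    by (simp add: Der_mult[OF \<delta>] mmul_add_right mmul_assoc[symmetric] tev_commute[OF k])
qed (use k in \<open>simp_all add: Der_add[OF \<delta>] mmul_add_right Der_smult[OF \<delta>]
      mmul_mscal_right Fq_def\<close>)

lemma Der_mmul_right_closed:
  assumes \<delta>: "\<delta> \<in> Der q m (A::'k tmatrix) n B" and k: "tmat m m' k" "mmul q m' k A' = mmul q m A k"
  shows "(\<lambda>a. mmul q m (\<delta> a) k) \<in> Der q m' A' n B"
proof (rule DerI)
  show "tmat n m' (mmul q m (\<delta> a) k)" if "a \<in> Aq q" for a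
    using tmat_mmul[OF Der_tmat[OF \<delta> that] k(1)] .
next
  fix a b :: "'k poly" assume "a \<in> Aq q" "b \<in> Aq q"
  then show "mmul q m (\<delta> (a * b)) k =
      mmul q n (tev q n B a) (mmul q m (\<delta> b) k) + mmul q m' (mmul q m (\<delta> a) k) (tev q m' A' b)"
    by (simp add: Der_mult[OF \<delta>] mmul_add_left mmul_assoc tev_commute[OF k])
qed (use k in \<open>simp_all add: Der_add[OF \<delta>] mmul_add_left Der_smult[OF \<delta>]
      mmul_mscal_left\<close>)

end

section \<open>Hom and Ext as modules\<close>

lemma Hom_mod_simps:
  "scar (Hom_mod q m A n B) = Hom_tau q m A n B" "seqv (Hom_mod q m A n B) = (=)"
  "sadd (Hom_mod q m A n B) = (+)" "szero (Hom_mod q m A n B) = 0"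
  "sact (Hom_mod q m A n B) = (\<lambda>a f. mmul q n (tev q n B a) f)"
  by (simp_all add: Hom_mod_def matrix_group_ops fun_eq_iff)

lemma Ext_mod_simps:
  "scar (Ext_mod q m A n B) = Der q m A n B" "seqv (Ext_mod q m A n B) = ext_eq q m A n B"
  "sadd (Ext_mod q m A n B) = (\<lambda>\<eta> \<eta>' a. \<eta> a + \<eta>' a)" "szero (Ext_mod q m A n B) = (\<lambda>a. 0)"
  "sact (Ext_mod q m A n B) = (\<lambda>a \<eta> b. mmul q n (tev q n B a) (\<eta> b))"
  by (simp_all add: Ext_mod_def matrix_group_ops)

lemma smod_homI:
  assumes "\<And>x. x \<in> scar M \<Longrightarrow> f x \<in> scar N"
    and "\<And>x y. x \<in> scar M \<Longrightarrow> y \<in> scar M \<Longrightarrow> seqv M x y \<Longrightarrow> seqv N (f x) (f y)"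
    and "\<And>x y. x \<in> scar M \<Longrightarrow> y \<in> scar M \<Longrightarrow> seqv N (f (sadd M x y)) (sadd N (f x) (f y))"
    and "\<And>a x. a \<in> R \<Longrightarrow> x \<in> scar M \<Longrightarrow> seqv N (f (sact M a x)) (sact N a (f x))"
  shows "smod_hom R M N f"
  using assms by (simp add: smod_hom_def)

context twisted_poly_ring
begin

lemma inner_der_uminus: "inner_der q m (A::'k tmatrix) n B (- U) a = - inner_der q m A n B U a"
  by (simp add: inner_der_def mmul_minus_left mmul_minus_right)

lemma mmul_inner_der_left:
  assumes k: "tmat p n k" "mmul q n k B = mmul q p C (k::'k tmatrix)" and a: "a \<in> Aq q"
  shows "mmul q n k (inner_der q m A n B U a) = inner_der q m A p C (mmul q n k U) a"
  by (simp add: inner_der_def mmul_diff_right mmul_assoc[symmetric] tev_commute[OF k a])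

lemma mmul_inner_der_right:
  assumes k: "tmat m m' k" "mmul q m' k A' = mmul q m A (k::'k tmatrix)" and a: "a \<in> Aq q"
  shows "mmul q m (inner_der q m A n B U a) k = inner_der q m' A' n B (mmul q m U k) a"
  by (simp add: inner_der_def mmul_diff_left mmul_assoc tev_commute[OF k a])

lemma Hom_tau_iff_inner_der:
  assumes A: "tmat m m (A::'k tmatrix)" and B: "tmat n n B"
  shows "f \<in> Hom_tau q m A n B \<longleftrightarrow> tmat n m f \<and> (\<forall>a\<in>Aq q. inner_der q m A n B f a = 0)"
proof
  assume "f \<in> Hom_tau q m A n B"
  then show "tmat n m f \<and> (\<forall>a\<in>Aq q. inner_der q m A n B f a = 0)"
    by (simp add: Hom_tau_def inner_der_def tev_commute)
next
  assume f: "tmat n m f \<and> (\<forall>a\<in>Aq q. inner_der q m A n B f a = 0)"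
  then have "inner_der q m A n B f [:0, 1:] = 0"
    using Aq_t by blast
  with f show "f \<in> Hom_tau q m A n B"
    by (simp add: Hom_tau_def inner_der_def tev_t[OF A] tev_t[OF B])
qed

lemma smod_hom_postcomp_Hom:
  assumes k: "tmat p n k" "mmul q n k B = mmul q p C (k::'k tmatrix)"
  shows "smod_hom (Aq q) (Hom_mod q g G n B) (Hom_mod q g G p C) (\<lambda>f. mmul q n k f)"
proof (rule smod_homI, unfold Hom_mod_simps)
  fix f assume "f \<in> Hom_tau q g G n B"
  then have f: "tmat n g f" "mmul q g f G = mmul q n B f"
    by (simp_all add: Hom_tau_def)
  have "mmul q g (mmul q n k f) G = mmul q n (mmul q n k B) f"
    by (simp add: mmul_assoc f(2))
  also have "\<dots> = mmul q p C (mmul q n k f)"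
    by (simp add: k(2) mmul_assoc)
  finally show "mmul q n k f \<in> Hom_tau q g G p C"
    using tmat_mmul[OF k(1) f(1)] by (simp add: Hom_tau_def)
qed (simp_all add: mmul_add_right mmul_assoc[symmetric] tev_commute[OF k])

lemma smod_hom_precomp_Hom:
  assumes k: "tmat m m' k" "mmul q m' k A' = mmul q m A (k::'k tmatrix)"
  shows "smod_hom (Aq q) (Hom_mod q m A g G) (Hom_mod q m' A' g G) (\<lambda>h. mmul q m h k)"
proof (rule smod_homI, unfold Hom_mod_simps)
  fix h assume "h \<in> Hom_tau q m A g G"
  then have h: "tmat g m h" "mmul q m h A = mmul q g G h"
    by (simp_all add: Hom_tau_def)
  have "mmul q m' (mmul q m h k) A' = mmul q m (mmul q m h A) k"
    by (simp add: mmul_assoc k(2))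
  also have "\<dots> = mmul q g G (mmul q m h k)"
    by (simp add: h(2) mmul_assoc)
  finally show "mmul q m h k \<in> Hom_tau q m' A' g G"
    using tmat_mmul[OF h(1) k(1)] by (simp add: Hom_tau_def)
qed (simp_all add: mmul_add_left mmul_assoc)

lemma smod_hom_postcomp_Ext:
  assumes k: "tmat p n k" "mmul q n k B = mmul q p C (k::'k tmatrix)"
  shows "smod_hom (Aq q) (Ext_mod q m A n B) (Ext_mod q m A p C) (\<lambda>\<eta> a. mmul q n k (\<eta> a))"
proof (rule smod_homI, unfold Ext_mod_simps)
  fix \<eta> assume "\<eta> \<in> Der q m A n B"
  then show "(\<lambda>a. mmul q n k (\<eta> a)) \<in> Der q m A p C"
    by (rule Der_mmul_left_closed[OF _ k])
next
  fix \<eta> \<eta>' assume "ext_eq q m A n B \<eta> \<eta>'"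
  then obtain U where U: "tmat n m U" "\<forall>a\<in>Aq q. \<eta> a - \<eta>' a = inner_der q m A n B U a"
    by (auto simp: ext_eq_iff_inner_der)
  show "ext_eq q m A p C (\<lambda>a. mmul q n k (\<eta> a)) (\<lambda>a. mmul q n k (\<eta>' a))"
    unfolding ext_eq_iff_inner_der
  proof (intro exI conjI ballI)
    show "tmat p m (mmul q n k U)"
      using tmat_mmul[OF k(1) U(1)] .
    fix a :: "'k poly" assume "a \<in> Aq q"
    then show "mmul q n k (\<eta> a) - mmul q n k (\<eta>' a) = inner_der q m A p C (mmul q n k U) a"
      using U(2) by (simp add: mmul_diff_right[symmetric] mmul_inner_der_left[OF k])
  qed
qed (auto intro!: ext_eq_on_Aq simp: mmul_add_right mmul_assoc[symmetric] tev_commute[OF k])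

lemma smod_hom_precomp_Ext:
  assumes k: "tmat m m' k" "mmul q m' k A' = mmul q m A (k::'k tmatrix)"
  shows "smod_hom (Aq q) (Ext_mod q m A n B) (Ext_mod q m' A' n B) (\<lambda>\<eta> a. mmul q m (\<eta> a) k)"
proof (rule smod_homI, unfold Ext_mod_simps)
  fix \<eta> assume "\<eta> \<in> Der q m A n B"
  then show "(\<lambda>a. mmul q m (\<eta> a) k) \<in> Der q m' A' n B"
    by (rule Der_mmul_right_closed[OF _ k])
next
  fix \<eta> \<eta>' assume "ext_eq q m A n B \<eta> \<eta>'"
  then obtain U where U: "tmat n m U" "\<forall>a\<in>Aq q. \<eta> a - \<eta>' a = inner_der q m A n B U a"
    by (auto simp: ext_eq_iff_inner_der)
  show "ext_eq q m' A' n B (\<lambda>a. mmul q m (\<eta> a) k) (\<lambda>a. mmul q m (\<eta>' a) k)"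
    unfolding ext_eq_iff_inner_der
  proof (intro exI conjI ballI)
    show "tmat n m' (mmul q m U k)"
      using tmat_mmul[OF U(1) k(1)] .
    fix a :: "'k poly" assume "a \<in> Aq q"
    then show "mmul q m (\<eta> a) k - mmul q m (\<eta>' a) k = inner_der q m' A' n B (mmul q m U k) a"
      using U(2) by (simp add: mmul_diff_left[symmetric] mmul_inner_der_right[OF k])
  qed
qed (auto intro!: ext_eq_on_Aq simp: mmul_add_left mmul_assoc)

lemma Der_mult_commute:
  assumes \<delta>: "\<delta> \<in> Der q d (T::'k tmatrix) e S" and a: "a \<in> Aq q" and b: "b \<in> Aq q"
  shows "mmul q d (\<delta> b) (tev q d T a) - mmul q e (tev q e S a) (\<delta> b) =
         mmul q d (\<delta> a) (tev q d T b) - mmul q e (tev q e S b) (\<delta> a)"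
  using Der_mult[OF \<delta> a b] Der_mult[OF \<delta> b a] by (simp add: mult.commute algebra_simps)

lemma smod_hom_Der_comp_left:
  assumes \<delta>: "\<delta> \<in> Der q d (T::'k tmatrix) e S"
  shows "smod_hom (Aq q) (Hom_mod q g G d T) (Ext_mod q g G e S) (\<lambda>f a. mmul q d (\<delta> a) f)"
proof (rule smod_homI, unfold Hom_mod_simps Ext_mod_simps)
  fix f assume "f \<in> Hom_tau q g G d T"
  then show "(\<lambda>a. mmul q d (\<delta> a) f) \<in> Der q g G e S"
    by (intro Der_mmul_right_closed[OF \<delta>]) (simp_all add: Hom_tau_def)
next
  fix a :: "'k poly" and f assume a: "a \<in> Aq q" and "f \<in> Hom_tau q g G d T"
  then have f: "tmat d g f" "mmul q g f G = mmul q d T f"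
    by (simp_all add: Hom_tau_def)
  show "ext_eq q g G e S (\<lambda>b. mmul q d (\<delta> b) (mmul q d (tev q d T a) f))
                         (\<lambda>b. mmul q e (tev q e S a) (mmul q d (\<delta> b) f))"
    unfolding ext_eq_iff_inner_der
  proof (intro exI conjI ballI)
    show "tmat e g (mmul q d (\<delta> a) f)"
      using tmat_mmul[OF Der_tmat[OF \<delta> a] f(1)] .
    fix b :: "'k poly" assume b: "b \<in> Aq q"
    have "mmul q d (\<delta> b) (mmul q d (tev q d T a) f) - mmul q e (tev q e S a) (mmul q d (\<delta> b) f) =
        mmul q d (mmul q d (\<delta> b) (tev q d T a) - mmul q e (tev q e S a) (\<delta> b)) f"
      by (simp add: mmul_diff_left mmul_assoc)
    also have "\<dots> = mmul q d (mmul q d (\<delta> a) (tev q d T b) - mmul q e (tev q e S b) (\<delta> a)) f"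
      by (simp only: Der_mult_commute[OF \<delta> a b])
    also have "\<dots> = inner_der q g G e S (mmul q d (\<delta> a) f) b"
      by (simp add: inner_der_def mmul_diff_left mmul_assoc tev_commute[OF f b])
    finally show "mmul q d (\<delta> b) (mmul q d (tev q d T a) f) - mmul q e (tev q e S a) (mmul q d (\<delta> b) f) =
        inner_der q g G e S (mmul q d (\<delta> a) f) b" .
  qed
qed (auto intro!: ext_eq_on_Aq simp: mmul_add_right)

lemma smod_hom_Der_comp_right:
  assumes \<delta>: "\<delta> \<in> Der q d (T::'k tmatrix) e S"
  shows "smod_hom (Aq q) (Hom_mod q e S g G) (Ext_mod q d T g G) (\<lambda>h a. mmul q e h (\<delta> a))"
proof (rule smod_homI, unfold Hom_mod_simps Ext_mod_simps)
  fix h assume "h \<in> Hom_tau q e S g G"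
  then show "(\<lambda>a. mmul q e h (\<delta> a)) \<in> Der q d T g G"
    by (intro Der_mmul_left_closed[OF \<delta>]) (simp_all add: Hom_tau_def)
qed (auto intro!: ext_eq_on_Aq simp: mmul_add_left mmul_assoc)

end

section \<open>The long exact sequences of an extension\<close>

locale t_module_extension = twisted_poly_ring q ty for q :: nat and ty :: "'k::field itself" +
  fixes d e g :: nat and T S G :: "'k tmatrix" and \<delta> :: "'k poly \<Rightarrow> 'k tmatrix"
  assumes tmat_T: "tmat d d T" and tmat_S: "tmat e e S" and tmat_G: "tmat g g G"
    and Der_\<delta>: "\<delta> \<in> Der q d T e S"
begin

abbreviation TX :: "'k tmatrix" where
  "TX \<equiv> ext_tmat d T \<delta> S"

lemma tmat_\<delta>: "a \<in> Aq q \<Longrightarrow> tmat e d (\<delta> a)"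
  by (rule Der_tmat[OF Der_\<delta>])

lemma tmat_TX: "tmat (d + e) (d + e) TX"
  unfolding ext_tmat_def by (rule tmat_blk[OF tmat_T tmat_\<delta>[OF Aq_t] tmat_S])

lemma tev_TX: "a \<in> Aq q \<Longrightarrow> tev q (d + e) TX a = blk d (tev q d T a) (\<delta> a) (tev q e S a)"
  by (rule tev_ext_tmat[OF Der_\<delta> tmat_T tmat_S])

lemma incl_mat_morphism: "mmul q e (incl_mat d e) S = mmul q (d + e) TX (incl_mat d e)"
  using tmat_S by (simp add: ext_tmat_def incl_mat_eq_vstack mmul_vstack_left mmul_blk_vstack
      mmul_mone_left mmul_mone_right)

lemma proj_mat_morphism: "mmul q (d + e) (proj_mat d) TX = mmul q d T (proj_mat d)"
  using tmat_T by (simp add: ext_tmat_def proj_mat_eq_hstack mmul_hstack_right mmul_hstack_blk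
      mmul_mone_left mmul_mone_right)

lemma incl_mat_morphism_neg: "mmul q e (- incl_mat d e) S = mmul q (d + e) TX (- incl_mat d e)"
  by (simp add: mmul_minus_left mmul_minus_right incl_mat_morphism)

lemma proj_mat_morphism_neg: "mmul q (d + e) (- proj_mat d) TX = mmul q d T (- proj_mat d)"
  by (simp add: mmul_minus_left mmul_minus_right proj_mat_morphism)

lemma inner_der_vstack:
  assumes a: "a \<in> Aq q"
  shows "inner_der q g G (d + e) TX (vstack d f U) a =
           vstack d (inner_der q g G d T f a) (inner_der q g G e S U a - mmul q d (\<delta> a) f)"
  by (simp add: inner_der_def tev_TX[OF a] mmul_vstack_left mmul_blk_vstack vstack_diff algebra_simps)

lemma inner_der_hstack:
  assumes a: "a \<in> Aq q"
  shows "inner_der q (d + e) TX g G (hstack d H K) a =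
           hstack d (inner_der q d T g G H a + mmul q e K (\<delta> a)) (inner_der q e S g G K a)"
  by (simp add: inner_der_def tev_TX[OF a] mmul_hstack_right mmul_hstack_blk hstack_diff algebra_simps)

lemma Der_lower_rows:
  assumes \<xi>: "\<xi> \<in> Der q g G (d + e) TX" and upper: "\<And>a. a \<in> Aq q \<Longrightarrow> upper_rows d (\<xi> a) = 0"
  shows "(\<lambda>a. lower_rows d (\<xi> a)) \<in> Der q g G e S"
proof (rule DerI)
  fix a b :: "'k poly" assume a: "a \<in> Aq q" and b: "b \<in> Aq q"
  define Z where "Z = lower_rows d (\<xi> b)"
  have "\<xi> b = vstack d 0 Z"
    using vstack_upper_lower_rows[of d "\<xi> b"] upper[OF b] by (simp add: Z_def)
  then have "mmul q (d + e) (tev q (d + e) TX a) (\<xi> b) = vstack d 0 (mmul q e (tev q e S a) Z)"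
    by (simp add: tev_TX[OF a] mmul_blk_vstack)
  then show "lower_rows d (\<xi> (a * b)) =
      mmul q e (tev q e S a) (lower_rows d (\<xi> b)) + mmul q g (lower_rows d (\<xi> a)) (tev q g G b)"
    by (simp add: Der_mult[OF \<xi> a b] lower_rows_add lower_rows_mmul Z_def)
qed (simp_all add: Der_add[OF \<xi>] Der_smult[OF \<xi>] lower_rows_add lower_rows_mscal tmat_lower_rows
    Der_tmat[OF \<xi>])

lemma Der_left_cols:
  assumes \<xi>: "\<xi> \<in> Der q (d + e) TX g G" and right: "\<And>a. a \<in> Aq q \<Longrightarrow> right_cols d (\<xi> a) = 0"
  shows "(\<lambda>a. left_cols d (\<xi> a)) \<in> Der q d T g G"
proof (rule DerI)
  fix a b :: "'k poly" assume a: "a \<in> Aq q" and b: "b \<in> Aq q"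
  define W where "W = left_cols d (\<xi> a)"
  have "\<xi> a = hstack d W 0"
    using hstack_left_right_cols[of d "\<xi> a"] right[OF a] by (simp add: W_def)
  then have "mmul q (d + e) (\<xi> a) (tev q (d + e) TX b) = hstack d (mmul q d W (tev q d T b)) 0"
    by (simp add: tev_TX[OF b] mmul_hstack_blk)
  moreover have "tmat g d (mmul q d W (tev q d T b))"
    unfolding W_def using tmat_left_cols[OF Der_tmat[OF \<xi> a]] tmat_tev[OF tmat_T] by (rule tmat_mmul)
  ultimately show "left_cols d (\<xi> (a * b)) =
      mmul q g (tev q g G a) (left_cols d (\<xi> b)) + mmul q d (left_cols d (\<xi> a)) (tev q d T b)"
    by (simp add: Der_mult[OF \<xi> a b] left_cols_add left_cols_hstack left_cols_mmul W_def)
next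
  fix a :: "'k poly" assume "a \<in> Aq q"
  then show "tmat g d (left_cols d (\<xi> a))"
    using tmat_left_cols[OF Der_tmat[OF \<xi>]] by blast
qed (simp_all add: Der_add[OF \<xi>] Der_smult[OF \<xi>] left_cols_add left_cols_mscal)

lemma vstack_in_Hom_TX_iff:
  assumes f: "tmat d g f" and U: "tmat e g U"
  shows "vstack d f U \<in> Hom_tau q g G (d + e) TX \<longleftrightarrow>
           f \<in> Hom_tau q g G d T \<and> (\<forall>a\<in>Aq q. inner_der q g G e S U a = mmul q d (\<delta> a) f)"
proof -
  have "inner_der q g G (d + e) TX (vstack d f U) a = 0 \<longleftrightarrow>
      inner_der q g G d T f a = 0 \<and> inner_der q g G e S U a = mmul q d (\<delta> a) f" if "a \<in> Aq q" for a
    by (simp add: inner_der_vstack[OF that] vstack_eq_0_iff[OF tmat_inner_der[OF f tmat_G tmat_T]])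
  then show ?thesis
    using f U tmat_G tmat_T tmat_TX
    by (auto simp: Hom_tau_iff_inner_der tmat_vstack)
qed

lemma hstack_in_Hom_TX_iff:
  assumes H: "tmat g d H" and K: "tmat g e K"
  shows "hstack d H K \<in> Hom_tau q (d + e) TX g G \<longleftrightarrow>
           K \<in> Hom_tau q e S g G \<and> (\<forall>a\<in>Aq q. inner_der q d T g G H a = - mmul q e K (\<delta> a))"
proof -
  have "inner_der q (d + e) TX g G (hstack d H K) a = 0 \<longleftrightarrow>
      inner_der q e S g G K a = 0 \<and> inner_der q d T g G H a = - mmul q e K (\<delta> a)" if a: "a \<in> Aq q" for a
  proof -
    have "tmat g d (inner_der q d T g G H a + mmul q e K (\<delta> a))"
      using tmat_inner_der[OF H tmat_T tmat_G] tmat_mmul[OF K tmat_\<delta>[OF a]] by (rule tmat_add)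
    then show ?thesis
      by (auto simp: inner_der_hstack[OF a] hstack_eq_0_iff eq_neg_iff_add_eq_0)
  qed
  then show ?thesis
    using H K tmat_G tmat_S tmat_TX
    by (auto simp: Hom_tau_iff_inner_der tmat_hstack)
qed

lemma exact_inj_covariant:
  "exact_inj (Hom_mod q g G e S) (Hom_mod q g G (d + e) TX) (\<lambda>f. mmul q e (incl_mat d e) f)"
  unfolding exact_inj_def Hom_mod_simps
proof (intro ballI impI)
  fix f assume f: "f \<in> Hom_tau q g G e S" and "mmul q e (incl_mat d e) f = 0"
  have ft: "tmat e g f"
    using f by (simp add: Hom_tau_def)
  then show "f = 0"
    using \<open>mmul q e (incl_mat d e) f = 0\<close> by (simp add: mmul_incl_mat_left[OF ft] vstack_eq_0_iff)
qed

lemma exact_at_Hom_X_covariant: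
  "exact_at (Hom_mod q g G e S) (Hom_mod q g G (d + e) TX) (Hom_mod q g G d T)
     (\<lambda>f. mmul q e (incl_mat d e) f) (\<lambda>h. mmul q (d + e) (proj_mat d) h)"
  unfolding exact_at_def Hom_mod_simps
proof (intro ballI iffI)
  fix h assume h: "h \<in> Hom_tau q g G (d + e) TX" and "mmul q (d + e) (proj_mat d) h = 0"
  have "tmat (d + e) g h"
    using h by (simp add: Hom_tau_def)
  then obtain f U where f: "tmat d g f" and U: "tmat e g U" and h_eq: "h = vstack d f U"
    by (rule vstack_cases)
  have U_inner: "\<forall>a\<in>Aq q. inner_der q g G e S U a = mmul q d (\<delta> a) f"
    using h by (simp add: h_eq vstack_in_Hom_TX_iff[OF f U])
  have "f = 0"
    using \<open>mmul q (d + e) (proj_mat d) h = 0\<close> by (simp add: h_eq mmul_proj_mat_vstack[OF f])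
  then have "U \<in> Hom_tau q g G e S"
    using U U_inner by (simp add: Hom_tau_iff_inner_der[OF tmat_G tmat_S])
  moreover have "mmul q e (incl_mat d e) U = h"
    using \<open>f = 0\<close> by (simp add: h_eq mmul_incl_mat_left[OF U])
  ultimately show "\<exists>f\<in>Hom_tau q g G e S. mmul q e (incl_mat d e) f = h"
    by blast
next
  fix h assume "\<exists>f\<in>Hom_tau q g G e S. mmul q e (incl_mat d e) f = h"
  then obtain f where "h = mmul q e (incl_mat d e) f"
    by blast
  then show "mmul q (d + e) (proj_mat d) h = 0"
    by (simp add: mmul_assoc[symmetric] mmul_proj_mat_incl_mat)
qed

lemma exact_at_Hom_E_covariant:
  "exact_at (Hom_mod q g G (d + e) TX) (Hom_mod q g G d T) (Ext_mod q g G e S)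
     (\<lambda>h. mmul q (d + e) (proj_mat d) h) (\<lambda>f a. mmul q d (\<delta> a) f)"
  unfolding exact_at_def Hom_mod_simps Ext_mod_simps ext_eq_iff_inner_der
proof (intro ballI iffI)
  fix f assume f: "f \<in> Hom_tau q g G d T"
    and "\<exists>U. tmat e g U \<and> (\<forall>a\<in>Aq q. mmul q d (\<delta> a) f - 0 = inner_der q g G e S U a)"
  then obtain U where U: "tmat e g U" and U_inner: "\<forall>a\<in>Aq q. inner_der q g G e S U a = mmul q d (\<delta> a) f"
    by fastforce
  have ft: "tmat d g f"
    using f by (simp add: Hom_tau_def)
  have "vstack d f U \<in> Hom_tau q g G (d + e) TX"
    using f U_inner by (simp add: vstack_in_Hom_TX_iff[OF ft U])
  then show "\<exists>h\<in>Hom_tau q g G (d + e) TX. mmul q (d + e) (proj_mat d) h = f"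
    using mmul_proj_mat_vstack[OF ft] by blast
next
  fix f assume "\<exists>h\<in>Hom_tau q g G (d + e) TX. mmul q (d + e) (proj_mat d) h = f"
  then obtain h where h: "h \<in> Hom_tau q g G (d + e) TX" and f_eq: "mmul q (d + e) (proj_mat d) h = f"
    by blast
  have "tmat (d + e) g h"
    using h by (simp add: Hom_tau_def)
  then obtain f' U where f': "tmat d g f'" and U: "tmat e g U" and h_eq: "h = vstack d f' U"
    by (rule vstack_cases)
  have "\<forall>a\<in>Aq q. inner_der q g G e S U a = mmul q d (\<delta> a) f'"
    using h by (simp add: h_eq vstack_in_Hom_TX_iff[OF f' U])
  moreover have "f' = f"
    using f_eq by (simp add: h_eq mmul_proj_mat_vstack[OF f'])
  ultimately show "\<exists>U. tmat e g U \<and> (\<forall>a\<in>Aq q. mmul q d (\<delta> a) f - 0 = inner_der q g G e S U a)"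
    using U by auto
qed

lemma incl_eq_inner_der_vstack_iff:
  assumes a: "a \<in> Aq q" and f: "tmat d g f" and N: "tmat e g N"
  shows "mmul q e (incl_mat d e) N = inner_der q g G (d + e) TX (vstack d f U) a \<longleftrightarrow>
           inner_der q g G d T f a = 0 \<and> N = inner_der q g G e S U a - mmul q d (\<delta> a) f"
  using vstack_eq_iff[OF tmat_zero tmat_inner_der[OF f tmat_G tmat_T]]
  by (auto simp: mmul_incl_mat_left[OF N] inner_der_vstack[OF a])

lemma exact_at_Ext_F_covariant:
  "exact_at (Hom_mod q g G d T) (Ext_mod q g G e S) (Ext_mod q g G (d + e) TX)
     (\<lambda>f a. mmul q d (\<delta> a) f) (\<lambda>\<eta> a. - mmul q e (incl_mat d e) (\<eta> a))"
  unfolding exact_at_def Hom_mod_simps Ext_mod_simps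
proof (intro ballI)
  fix \<eta> assume \<eta>: "\<eta> \<in> Der q g G e S"
  have key: "- mmul q e (incl_mat d e) (\<eta> a) - 0 = inner_der q g G (d + e) TX (vstack d f U) a \<longleftrightarrow>
      inner_der q g G d T f a = 0 \<and> mmul q d (\<delta> a) f - \<eta> a = inner_der q g G e S U a"
    if "a \<in> Aq q" "tmat d g f" for a f U
    using incl_eq_inner_der_vstack_iff[OF that tmat_minus[OF Der_tmat[OF \<eta> \<open>a \<in> Aq q\<close>]], of U]
    by (auto simp: mmul_minus_right algebra_simps)
  show "ext_eq q g G (d + e) TX (\<lambda>a. - mmul q e (incl_mat d e) (\<eta> a)) (\<lambda>a. 0) \<longleftrightarrow>
      (\<exists>f\<in>Hom_tau q g G d T. ext_eq q g G e S (\<lambda>a. mmul q d (\<delta> a) f) \<eta>)"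
  proof
    assume "ext_eq q g G (d + e) TX (\<lambda>a. - mmul q e (incl_mat d e) (\<eta> a)) (\<lambda>a. 0)"
    then obtain V where V: "tmat (d + e) g V"
      and V_inner: "\<forall>a\<in>Aq q. - mmul q e (incl_mat d e) (\<eta> a) - 0 = inner_der q g G (d + e) TX V a"
      by (auto simp: ext_eq_iff_inner_der)
    obtain f U where f: "tmat d g f" and U: "tmat e g U" and V_eq: "V = vstack d f U"
      using V by (rule vstack_cases)
    have f_U: "inner_der q g G d T f a = 0 \<and> mmul q d (\<delta> a) f - \<eta> a = inner_der q g G e S U a"
      if a: "a \<in> Aq q" for a
      using V_inner key[OF a f, of U] a unfolding V_eq by blast
    then have "f \<in> Hom_tau q g G d T"
      using f by (simp add: Hom_tau_iff_inner_der[OF tmat_G tmat_T])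
    moreover have "ext_eq q g G e S (\<lambda>a. mmul q d (\<delta> a) f) \<eta>"
      using U f_U by (auto simp: ext_eq_iff_inner_der)
    ultimately show "\<exists>f\<in>Hom_tau q g G d T. ext_eq q g G e S (\<lambda>a. mmul q d (\<delta> a) f) \<eta>"
      by blast
  next
    assume "\<exists>f\<in>Hom_tau q g G d T. ext_eq q g G e S (\<lambda>a. mmul q d (\<delta> a) f) \<eta>"
    then obtain f U where f: "f \<in> Hom_tau q g G d T" and U: "tmat e g U"
      and U_inner: "\<forall>a\<in>Aq q. mmul q d (\<delta> a) f - \<eta> a = inner_der q g G e S U a"
      by (auto simp: ext_eq_iff_inner_der)
    have ft: "tmat d g f"
      using f by (simp add: Hom_tau_def)
    have "- mmul q e (incl_mat d e) (\<eta> a) - 0 = inner_der q g G (d + e) TX (vstack d f U) a"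
      if a: "a \<in> Aq q" for a
      using f U_inner key[OF a ft, of U] a by (auto simp: Hom_tau_iff_inner_der[OF tmat_G tmat_T])
    then show "ext_eq q g G (d + e) TX (\<lambda>a. - mmul q e (incl_mat d e) (\<eta> a)) (\<lambda>a. 0)"
      using tmat_vstack[OF ft U] by (auto simp: ext_eq_iff_inner_der)
  qed
qed

lemma proj_inner_der_imp_incl_image:
  assumes \<xi>: "\<xi> \<in> Der q g G (d + e) TX" and U: "tmat d g U"
    and U_inner: "\<And>a. a \<in> Aq q \<Longrightarrow> - mmul q (d + e) (proj_mat d) (\<xi> a) = inner_der q g G d T U a"
  shows "\<exists>\<eta>\<in>Der q g G e S. \<forall>a\<in>Aq q.
           - mmul q e (incl_mat d e) (\<eta> a) - \<xi> a = inner_der q g G (d + e) TX (vstack d U 0) a"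
proof -
  define \<xi>' where "\<xi>' = (\<lambda>a. \<xi> a + inner_der q g G (d + e) TX (vstack d U 0) a)"
  have \<xi>': "\<xi>' \<in> Der q g G (d + e) TX"
    unfolding \<xi>'_def using \<xi> inner_der_in_Der[OF tmat_vstack[OF U tmat_zero] tmat_G tmat_TX]
    by (rule Der_plus_closed)
  define Z where "Z a = lower_rows d (\<xi> a) - mmul q d (\<delta> a) U" for a
  have \<xi>'_eq: "\<xi>' a = vstack d 0 (Z a)" if a: "a \<in> Aq q" for a
  proof -
    have "inner_der q g G d T U a = - upper_rows d (\<xi> a)"
      using mmul_proj_mat_left[OF Der_tmat[OF \<xi> a], where q = q] U_inner[OF a] by simp
    moreover have "\<xi>' a = vstack d (upper_rows d (\<xi> a)) (lower_rows d (\<xi> a)) +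
        vstack d (inner_der q g G d T U a) (- mmul q d (\<delta> a) U)"
      by (simp add: \<xi>'_def inner_der_vstack[OF a] vstack_upper_lower_rows)
    ultimately show ?thesis
      by (simp add: vstack_add Z_def)
  qed
  define \<eta> where "\<eta> = (\<lambda>a. - lower_rows d (\<xi>' a))"
  have "(\<lambda>a. lower_rows d (\<xi>' a)) \<in> Der q g G e S"
    by (rule Der_lower_rows[OF \<xi>']) (simp add: \<xi>'_eq upper_rows_vstack)
  then have "\<eta> \<in> Der q g G e S"
    unfolding \<eta>_def by (rule Der_uminus_closed)
  moreover have "- mmul q e (incl_mat d e) (\<eta> a) - \<xi> a = inner_der q g G (d + e) TX (vstack d U 0) a"
    if a: "a \<in> Aq q" for a
  proof -
    have "tmat e g (Z a)"
      using tmat_lower_rows[OF Der_tmat[OF \<xi>' a]] by (simp add: \<xi>'_eq[OF a])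
    then have "- mmul q e (incl_mat d e) (\<eta> a) = \<xi>' a"
      by (simp add: \<eta>_def \<xi>'_eq[OF a] mmul_minus_right mmul_incl_mat_left)
    then show ?thesis
      by (simp add: \<xi>'_def)
  qed
  ultimately show ?thesis
    by blast
qed

lemma exact_at_Ext_X_covariant:
  "exact_at (Ext_mod q g G e S) (Ext_mod q g G (d + e) TX) (Ext_mod q g G d T)
     (\<lambda>\<eta> a. - mmul q e (incl_mat d e) (\<eta> a)) (\<lambda>\<xi> a. - mmul q (d + e) (proj_mat d) (\<xi> a))"
  unfolding exact_at_def Ext_mod_simps
proof (intro ballI iffI)
  fix \<xi> assume \<xi>: "\<xi> \<in> Der q g G (d + e) TX"
    and "ext_eq q g G d T (\<lambda>a. - mmul q (d + e) (proj_mat d) (\<xi> a)) (\<lambda>a. 0)"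
  then obtain U where U: "tmat d g U"
    and "\<forall>a\<in>Aq q. - mmul q (d + e) (proj_mat d) (\<xi> a) = inner_der q g G d T U a"
    by (auto simp: ext_eq_iff_inner_der)
  then obtain \<eta> where "\<eta> \<in> Der q g G e S"
    and "\<forall>a\<in>Aq q. - mmul q e (incl_mat d e) (\<eta> a) - \<xi> a = inner_der q g G (d + e) TX (vstack d U 0) a"
    using proj_inner_der_imp_incl_image[OF \<xi> U] by blast
  then show "\<exists>\<eta>\<in>Der q g G e S. ext_eq q g G (d + e) TX (\<lambda>a. - mmul q e (incl_mat d e) (\<eta> a)) \<xi>"
    using tmat_vstack[OF U tmat_zero] by (auto simp: ext_eq_iff_inner_der)
next
  fix \<xi> assume "\<exists>\<eta>\<in>Der q g G e S. ext_eq q g G (d + e) TX (\<lambda>a. - mmul q e (incl_mat d e) (\<eta> a)) \<xi>"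
  then obtain \<eta> V where V: "tmat (d + e) g V"
    and V_inner: "\<forall>a\<in>Aq q. - mmul q e (incl_mat d e) (\<eta> a) - \<xi> a = inner_der q g G (d + e) TX V a"
    by (auto simp: ext_eq_iff_inner_der)
  have "- mmul q (d + e) (proj_mat d) (\<xi> a) - 0 = inner_der q g G d T (mmul q (d + e) (proj_mat d) V) a"
    if a: "a \<in> Aq q" for a
  proof -
    have "mmul q (d + e) (proj_mat d) (- mmul q e (incl_mat d e) (\<eta> a) - \<xi> a) =
        - mmul q (d + e) (proj_mat d) (\<xi> a)"
      by (simp add: mmul_distribs mmul_assoc[symmetric] mmul_proj_mat_incl_mat)
    then show ?thesis
      using V_inner a mmul_inner_der_left[OF tmat_proj_mat proj_mat_morphism a] by simp
  qed
  moreover have "tmat d g (mmul q (d + e) (proj_mat d) V)"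
    by (rule tmat_mmul[OF tmat_proj_mat V])
  ultimately show "ext_eq q g G d T (\<lambda>a. - mmul q (d + e) (proj_mat d) (\<xi> a)) (\<lambda>a. 0)"
    by (auto simp: ext_eq_iff_inner_der)
qed

lemma exact_surj_covariant:
  "exact_surj (Ext_mod q g G (d + e) TX) (Ext_mod q g G d T) (\<lambda>\<xi> a. - mmul q (d + e) (proj_mat d) (\<xi> a))"
  unfolding exact_surj_def Ext_mod_simps
proof
  fix \<eta> assume \<eta>: "\<eta> \<in> Der q g G d T"
  have D: "tmat (d + e) g (vstack d (- \<eta> [:0, 1:]) 0)"
    using tmat_minus[OF Der_tmat[OF \<eta> Aq_t]] tmat_zero by (rule tmat_vstack)
  obtain \<xi> where \<xi>: "\<xi> \<in> Der q g G (d + e) TX" and \<xi>_t: "\<xi> [:0, 1:] = vstack d (- \<eta> [:0, 1:]) 0"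
    using Der_exists[OF tmat_G D tmat_TX] by blast
  have "(\<lambda>a. - mmul q (d + e) (proj_mat d) (\<xi> a)) \<in> Der q g G d T"
    using Der_mmul_left_closed[OF \<xi> tmat_proj_mat proj_mat_morphism] by (rule Der_uminus_closed)
  moreover have "- mmul q (d + e) (proj_mat d) (\<xi> [:0, 1:]) = \<eta> [:0, 1:]"
    using mmul_proj_mat_vstack[OF tmat_minus[OF Der_tmat[OF \<eta> Aq_t]]] by (simp add: \<xi>_t)
  ultimately have "- mmul q (d + e) (proj_mat d) (\<xi> a) = \<eta> a" if "a \<in> Aq q" for a
    using Der_eqI[OF _ \<eta> _ that] by blast
  then show "\<exists>\<xi>\<in>Der q g G (d + e) TX. ext_eq q g G d T (\<lambda>a. - mmul q (d + e) (proj_mat d) (\<xi> a)) \<eta>"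
    using \<xi> by (auto intro: ext_eq_on_Aq)
qed

lemma exact_inj_contravariant:
  "exact_inj (Hom_mod q d T g G) (Hom_mod q (d + e) TX g G) (\<lambda>h. mmul q d h (proj_mat d))"
  unfolding exact_inj_def Hom_mod_simps
proof (intro ballI impI)
  fix h assume h: "h \<in> Hom_tau q d T g G" and "mmul q d h (proj_mat d) = 0"
  have ht: "tmat g d h"
    using h by (simp add: Hom_tau_def)
  then show "h = 0"
    using \<open>mmul q d h (proj_mat d) = 0\<close> by (simp add: mmul_proj_mat_right[OF ht] hstack_eq_0_iff[OF ht])
qed

lemma exact_at_Hom_X_contravariant:
  "exact_at (Hom_mod q d T g G) (Hom_mod q (d + e) TX g G) (Hom_mod q e S g G)
     (\<lambda>h. mmul q d h (proj_mat d)) (\<lambda>H. mmul q (d + e) H (incl_mat d e))"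
  unfolding exact_at_def Hom_mod_simps
proof (intro ballI iffI)
  fix H assume H: "H \<in> Hom_tau q (d + e) TX g G" and "mmul q (d + e) H (incl_mat d e) = 0"
  have "tmat g (d + e) H"
    using H by (simp add: Hom_tau_def)
  then obtain h K where h: "tmat g d h" and K: "tmat g e K" and H_eq: "H = hstack d h K"
    by (rule hstack_cases)
  have h_inner: "\<forall>a\<in>Aq q. inner_der q d T g G h a = - mmul q e K (\<delta> a)"
    using H by (simp add: H_eq hstack_in_Hom_TX_iff[OF h K])
  have "K = 0"
    using \<open>mmul q (d + e) H (incl_mat d e) = 0\<close> by (simp add: H_eq mmul_hstack_incl_mat[OF K])
  then have "h \<in> Hom_tau q d T g G"
    using h h_inner by (simp add: Hom_tau_iff_inner_der[OF tmat_T tmat_G])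
  moreover have "mmul q d h (proj_mat d) = H"
    using \<open>K = 0\<close> by (simp add: H_eq mmul_proj_mat_right[OF h])
  ultimately show "\<exists>h\<in>Hom_tau q d T g G. mmul q d h (proj_mat d) = H"
    by blast
next
  fix H assume "\<exists>h\<in>Hom_tau q d T g G. mmul q d h (proj_mat d) = H"
  then obtain h where "H = mmul q d h (proj_mat d)"
    by blast
  then show "mmul q (d + e) H (incl_mat d e) = 0"
    by (simp add: mmul_assoc mmul_proj_mat_incl_mat)
qed

lemma exact_at_Hom_F_contravariant:
  "exact_at (Hom_mod q (d + e) TX g G) (Hom_mod q e S g G) (Ext_mod q d T g G)
     (\<lambda>H. mmul q (d + e) H (incl_mat d e)) (\<lambda>h a. mmul q e h (\<delta> a))"
  unfolding exact_at_def Hom_mod_simps Ext_mod_simps ext_eq_iff_inner_der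
proof (intro ballI iffI)
  fix K assume K: "K \<in> Hom_tau q e S g G"
    and "\<exists>U. tmat g d U \<and> (\<forall>a\<in>Aq q. mmul q e K (\<delta> a) - 0 = inner_der q d T g G U a)"
  then obtain U where U: "tmat g d U" and U_inner: "\<forall>a\<in>Aq q. inner_der q d T g G U a = mmul q e K (\<delta> a)"
    by fastforce
  have Kt: "tmat g e K"
    using K by (simp add: Hom_tau_def)
  have "hstack d (- U) K \<in> Hom_tau q (d + e) TX g G"
    using K U_inner by (simp add: hstack_in_Hom_TX_iff[OF tmat_minus[OF U] Kt] inner_der_uminus)
  then show "\<exists>H\<in>Hom_tau q (d + e) TX g G. mmul q (d + e) H (incl_mat d e) = K"
    using mmul_hstack_incl_mat[OF Kt] by blast
next
  fix K assume "\<exists>H\<in>Hom_tau q (d + e) TX g G. mmul q (d + e) H (incl_mat d e) = K"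
  then obtain H where H: "H \<in> Hom_tau q (d + e) TX g G" and K_eq: "mmul q (d + e) H (incl_mat d e) = K"
    by blast
  have "tmat g (d + e) H"
    using H by (simp add: Hom_tau_def)
  then obtain h K' where h: "tmat g d h" and K': "tmat g e K'" and H_eq: "H = hstack d h K'"
    by (rule hstack_cases)
  have "\<forall>a\<in>Aq q. inner_der q d T g G h a = - mmul q e K' (\<delta> a)"
    using H by (simp add: H_eq hstack_in_Hom_TX_iff[OF h K'])
  moreover have "K' = K"
    using K_eq by (simp add: H_eq mmul_hstack_incl_mat[OF K'])
  ultimately have "\<forall>a\<in>Aq q. mmul q e K (\<delta> a) - 0 = inner_der q d T g G (- h) a"
    by (simp add: inner_der_uminus)
  then show "\<exists>U. tmat g d U \<and> (\<forall>a\<in>Aq q. mmul q e K (\<delta> a) - 0 = inner_der q d T g G U a)"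
    using tmat_minus[OF h] by blast
qed

lemma proj_eq_inner_der_hstack_iff:
  assumes a: "a \<in> Aq q" and H: "tmat g d H" and K: "tmat g e K" and N: "tmat g d N"
  shows "mmul q d N (proj_mat d) = inner_der q (d + e) TX g G (hstack d H K) a \<longleftrightarrow>
           inner_der q e S g G K a = 0 \<and> N = inner_der q d T g G H a + mmul q e K (\<delta> a)"
proof -
  have "tmat g d (inner_der q d T g G H a + mmul q e K (\<delta> a))"
    using tmat_inner_der[OF H tmat_T tmat_G] tmat_mmul[OF K tmat_\<delta>[OF a]] by (rule tmat_add)
  then show ?thesis
    using hstack_eq_iff[OF N] by (auto simp: mmul_proj_mat_right[OF N] inner_der_hstack[OF a])
qed

lemma exact_at_Ext_E_contravariant:
  "exact_at (Hom_mod q e S g G) (Ext_mod q d T g G) (Ext_mod q (d + e) TX g G)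
     (\<lambda>h a. mmul q e h (\<delta> a)) (\<lambda>\<eta> a. - mmul q d (\<eta> a) (proj_mat d))"
  unfolding exact_at_def Hom_mod_simps Ext_mod_simps
proof (intro ballI)
  fix \<eta> assume \<eta>: "\<eta> \<in> Der q d T g G"
  have key: "- mmul q d (\<eta> a) (proj_mat d) - 0 = inner_der q (d + e) TX g G (hstack d H K) a \<longleftrightarrow>
      inner_der q e S g G K a = 0 \<and> mmul q e (- K) (\<delta> a) - \<eta> a = inner_der q d T g G H a"
    if "a \<in> Aq q" "tmat g d H" "tmat g e K" for a H K
    using proj_eq_inner_der_hstack_iff[OF that tmat_minus[OF Der_tmat[OF \<eta> \<open>a \<in> Aq q\<close>]]]
    by (auto simp: mmul_minus_left diff_eq_eq neg_eq_iff_add_eq_0 add_ac)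
  show "ext_eq q (d + e) TX g G (\<lambda>a. - mmul q d (\<eta> a) (proj_mat d)) (\<lambda>a. 0) \<longleftrightarrow>
      (\<exists>h\<in>Hom_tau q e S g G. ext_eq q d T g G (\<lambda>a. mmul q e h (\<delta> a)) \<eta>)"
  proof
    assume "ext_eq q (d + e) TX g G (\<lambda>a. - mmul q d (\<eta> a) (proj_mat d)) (\<lambda>a. 0)"
    then obtain V where V: "tmat g (d + e) V"
      and V_inner: "\<forall>a\<in>Aq q. - mmul q d (\<eta> a) (proj_mat d) - 0 = inner_der q (d + e) TX g G V a"
      by (auto simp: ext_eq_iff_inner_der)
    obtain H K where H: "tmat g d H" and K: "tmat g e K" and V_eq: "V = hstack d H K"
      using V by (rule hstack_cases)
    have H_K: "inner_der q e S g G K a = 0 \<and> mmul q e (- K) (\<delta> a) - \<eta> a = inner_der q d T g G H a"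
      if a: "a \<in> Aq q" for a
      using V_inner key[OF a H K] a unfolding V_eq by blast
    then have "- K \<in> Hom_tau q e S g G"
      using tmat_minus[OF K] by (simp add: Hom_tau_iff_inner_der[OF tmat_S tmat_G] inner_der_uminus)
    moreover have "ext_eq q d T g G (\<lambda>a. mmul q e (- K) (\<delta> a)) \<eta>"
      using H H_K by (auto simp: ext_eq_iff_inner_der)
    ultimately show "\<exists>h\<in>Hom_tau q e S g G. ext_eq q d T g G (\<lambda>a. mmul q e h (\<delta> a)) \<eta>"
      by blast
  next
    assume "\<exists>h\<in>Hom_tau q e S g G. ext_eq q d T g G (\<lambda>a. mmul q e h (\<delta> a)) \<eta>"
    then obtain h U where h: "h \<in> Hom_tau q e S g G" and U: "tmat g d U"
      and U_inner: "\<forall>a\<in>Aq q. mmul q e h (\<delta> a) - \<eta> a = inner_der q d T g G U a"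
      by (auto simp: ext_eq_iff_inner_der)
    have ht: "tmat g e (- h)"
      using h by (simp add: Hom_tau_def tmat_minus)
    have "- mmul q d (\<eta> a) (proj_mat d) - 0 = inner_der q (d + e) TX g G (hstack d U (- h)) a"
      if a: "a \<in> Aq q" for a
      using h U_inner key[OF a U ht] a
      by (auto simp: Hom_tau_iff_inner_der[OF tmat_S tmat_G] inner_der_uminus)
    then show "ext_eq q (d + e) TX g G (\<lambda>a. - mmul q d (\<eta> a) (proj_mat d)) (\<lambda>a. 0)"
      using tmat_hstack[OF U ht] by (auto simp: ext_eq_iff_inner_der)
  qed
qed

lemma incl_inner_der_imp_proj_image:
  assumes \<xi>: "\<xi> \<in> Der q (d + e) TX g G" and U: "tmat g e U"
    and U_inner: "\<And>a. a \<in> Aq q \<Longrightarrow> - mmul q (d + e) (\<xi> a) (incl_mat d e) = inner_der q e S g G U a"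
  shows "\<exists>\<eta>\<in>Der q d T g G. \<forall>a\<in>Aq q.
           - mmul q d (\<eta> a) (proj_mat d) - \<xi> a = inner_der q (d + e) TX g G (hstack d 0 U) a"
proof -
  define \<xi>' where "\<xi>' = (\<lambda>a. \<xi> a + inner_der q (d + e) TX g G (hstack d 0 U) a)"
  have \<xi>': "\<xi>' \<in> Der q (d + e) TX g G"
    unfolding \<xi>'_def using \<xi> inner_der_in_Der[OF tmat_hstack[OF tmat_zero U] tmat_TX tmat_G]
    by (rule Der_plus_closed)
  define Z where "Z a = left_cols d (\<xi> a) + mmul q e U (\<delta> a)" for a
  have \<xi>'_eq: "\<xi>' a = hstack d (Z a) 0" if a: "a \<in> Aq q" for a
  proof -
    have "inner_der q e S g G U a = - right_cols d (\<xi> a)"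
      using mmul_incl_mat_right[OF Der_tmat[OF \<xi> a], where q = q] U_inner[OF a] by simp
    moreover have "\<xi>' a = hstack d (left_cols d (\<xi> a)) (right_cols d (\<xi> a)) +
        hstack d (mmul q e U (\<delta> a)) (inner_der q e S g G U a)"
      by (simp add: \<xi>'_def inner_der_hstack[OF a] hstack_left_right_cols)
    ultimately show ?thesis
      by (simp add: hstack_add Z_def)
  qed
  define \<eta> where "\<eta> = (\<lambda>a. - left_cols d (\<xi>' a))"
  have "(\<lambda>a. left_cols d (\<xi>' a)) \<in> Der q d T g G"
    by (rule Der_left_cols[OF \<xi>']) (simp add: \<xi>'_eq)
  then have "\<eta> \<in> Der q d T g G"
    unfolding \<eta>_def by (rule Der_uminus_closed)
  moreover have "- mmul q d (\<eta> a) (proj_mat d) - \<xi> a = inner_der q (d + e) TX g G (hstack d 0 U) a"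
    if a: "a \<in> Aq q" for a
  proof -
    have Z: "tmat g d (Z a)"
      unfolding Z_def using tmat_left_cols[OF Der_tmat[OF \<xi> a]] tmat_mmul[OF U tmat_\<delta>[OF a]]
      by (rule tmat_add)
    then have "- mmul q d (\<eta> a) (proj_mat d) = \<xi>' a"
      by (simp add: \<eta>_def \<xi>'_eq[OF a] left_cols_hstack mmul_minus_left mmul_proj_mat_right[OF Z])
    then show ?thesis
      by (simp add: \<xi>'_def)
  qed
  ultimately show ?thesis
    by blast
qed

lemma exact_at_Ext_X_contravariant:
  "exact_at (Ext_mod q d T g G) (Ext_mod q (d + e) TX g G) (Ext_mod q e S g G)
     (\<lambda>\<eta> a. - mmul q d (\<eta> a) (proj_mat d)) (\<lambda>\<xi> a. - mmul q (d + e) (\<xi> a) (incl_mat d e))"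
  unfolding exact_at_def Ext_mod_simps
proof (intro ballI iffI)
  fix \<xi> assume \<xi>: "\<xi> \<in> Der q (d + e) TX g G"
    and "ext_eq q e S g G (\<lambda>a. - mmul q (d + e) (\<xi> a) (incl_mat d e)) (\<lambda>a. 0)"
  then obtain U where U: "tmat g e U"
    and "\<forall>a\<in>Aq q. - mmul q (d + e) (\<xi> a) (incl_mat d e) = inner_der q e S g G U a"
    by (auto simp: ext_eq_iff_inner_der)
  then obtain \<eta> where "\<eta> \<in> Der q d T g G"
    and "\<forall>a\<in>Aq q. - mmul q d (\<eta> a) (proj_mat d) - \<xi> a = inner_der q (d + e) TX g G (hstack d 0 U) a"
    using incl_inner_der_imp_proj_image[OF \<xi> U] by blast
  then show "\<exists>\<eta>\<in>Der q d T g G. ext_eq q (d + e) TX g G (\<lambda>a. - mmul q d (\<eta> a) (proj_mat d)) \<xi>"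
    using tmat_hstack[OF tmat_zero U] by (auto simp: ext_eq_iff_inner_der)
next
  fix \<xi> assume "\<exists>\<eta>\<in>Der q d T g G. ext_eq q (d + e) TX g G (\<lambda>a. - mmul q d (\<eta> a) (proj_mat d)) \<xi>"
  then obtain \<eta> W where W: "tmat g (d + e) W"
    and W_inner: "\<forall>a\<in>Aq q. - mmul q d (\<eta> a) (proj_mat d) - \<xi> a = inner_der q (d + e) TX g G W a"
    by (auto simp: ext_eq_iff_inner_der)
  have "- mmul q (d + e) (\<xi> a) (incl_mat d e) - 0 = inner_der q e S g G (mmul q (d + e) W (incl_mat d e)) a"
    if a: "a \<in> Aq q" for a
  proof -
    have "mmul q (d + e) (- mmul q d (\<eta> a) (proj_mat d) - \<xi> a) (incl_mat d e) =
        - mmul q (d + e) (\<xi> a) (incl_mat d e)"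
      by (simp add: mmul_distribs mmul_assoc mmul_proj_mat_incl_mat)
    then show ?thesis
      using W_inner a mmul_inner_der_right[OF tmat_incl_mat incl_mat_morphism a] by simp
  qed
  moreover have "tmat g e (mmul q (d + e) W (incl_mat d e))"
    by (rule tmat_mmul[OF W tmat_incl_mat])
  ultimately show "ext_eq q e S g G (\<lambda>a. - mmul q (d + e) (\<xi> a) (incl_mat d e)) (\<lambda>a. 0)"
    by (auto simp: ext_eq_iff_inner_der)
qed

lemma exact_surj_contravariant:
  "exact_surj (Ext_mod q (d + e) TX g G) (Ext_mod q e S g G) (\<lambda>\<xi> a. - mmul q (d + e) (\<xi> a) (incl_mat d e))"
  unfolding exact_surj_def Ext_mod_simps
proof
  fix \<eta> assume \<eta>: "\<eta> \<in> Der q e S g G"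
  have D: "tmat g (d + e) (hstack d 0 (- \<eta> [:0, 1:]))"
    using tmat_zero tmat_minus[OF Der_tmat[OF \<eta> Aq_t]] by (rule tmat_hstack)
  obtain \<xi> where \<xi>: "\<xi> \<in> Der q (d + e) TX g G" and \<xi>_t: "\<xi> [:0, 1:] = hstack d 0 (- \<eta> [:0, 1:])"
    using Der_exists[OF tmat_TX D tmat_G] by blast
  have "(\<lambda>a. - mmul q (d + e) (\<xi> a) (incl_mat d e)) \<in> Der q e S g G"
    using Der_mmul_right_closed[OF \<xi> tmat_incl_mat incl_mat_morphism] by (rule Der_uminus_closed)
  moreover have "- mmul q (d + e) (\<xi> [:0, 1:]) (incl_mat d e) = \<eta> [:0, 1:]"
    using mmul_hstack_incl_mat[OF tmat_minus[OF Der_tmat[OF \<eta> Aq_t]]] by (simp add: \<xi>_t)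
  ultimately have "- mmul q (d + e) (\<xi> a) (incl_mat d e) = \<eta> a" if "a \<in> Aq q" for a
    using Der_eqI[OF _ \<eta> _ that] by blast
  then show "\<exists>\<xi>\<in>Der q (d + e) TX g G. ext_eq q e S g G (\<lambda>a. - mmul q (d + e) (\<xi> a) (incl_mat d e)) \<eta>"
    using \<xi> by (auto intro: ext_eq_on_Aq)
qed

lemma exact6_covariant:
  "exact6 (Aq q)
     (Hom_mod q g G e S) (Hom_mod q g G (d + e) TX) (Hom_mod q g G d T)
     (Ext_mod q g G e S) (Ext_mod q g G (d + e) TX) (Ext_mod q g G d T)
     (\<lambda>f. mmul q e (incl_mat d e) f) (\<lambda>h. mmul q (d + e) (proj_mat d) h) (\<lambda>f a. mmul q d (\<delta> a) f)
     (\<lambda>\<eta> a. - mmul q e (incl_mat d e) (\<eta> a)) (\<lambda>\<xi> a. - mmul q (d + e) (proj_mat d) (\<xi> a))"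
proof -
  have "smod_hom (Aq q) (Ext_mod q g G e S) (Ext_mod q g G (d + e) TX)
      (\<lambda>\<eta> a. - mmul q e (incl_mat d e) (\<eta> a))"
    using smod_hom_postcomp_Ext[OF tmat_minus[OF tmat_incl_mat] incl_mat_morphism_neg]
    by (simp add: mmul_minus_left)
  moreover have "smod_hom (Aq q) (Ext_mod q g G (d + e) TX) (Ext_mod q g G d T)
      (\<lambda>\<xi> a. - mmul q (d + e) (proj_mat d) (\<xi> a))"
    using smod_hom_postcomp_Ext[OF tmat_minus[OF tmat_proj_mat] proj_mat_morphism_neg]
    by (simp add: mmul_minus_left)
  ultimately show ?thesis
    unfolding exact6_def
    using smod_hom_postcomp_Hom[OF tmat_incl_mat incl_mat_morphism]
      smod_hom_postcomp_Hom[OF tmat_proj_mat proj_mat_morphism] smod_hom_Der_comp_left[OF Der_\<delta>]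
      exact_inj_covariant exact_at_Hom_X_covariant exact_at_Hom_E_covariant
      exact_at_Ext_F_covariant exact_at_Ext_X_covariant exact_surj_covariant
    by blast
qed

lemma exact6_contravariant:
  "exact6 (Aq q)
     (Hom_mod q d T g G) (Hom_mod q (d + e) TX g G) (Hom_mod q e S g G)
     (Ext_mod q d T g G) (Ext_mod q (d + e) TX g G) (Ext_mod q e S g G)
     (\<lambda>h. mmul q d h (proj_mat d)) (\<lambda>h. mmul q (d + e) h (incl_mat d e)) (\<lambda>h a. mmul q e h (\<delta> a))
     (\<lambda>\<eta> a. - mmul q d (\<eta> a) (proj_mat d)) (\<lambda>\<xi> a. - mmul q (d + e) (\<xi> a) (incl_mat d e))"
proof -
  have "smod_hom (Aq q) (Ext_mod q d T g G) (Ext_mod q (d + e) TX g G)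
      (\<lambda>\<eta> a. - mmul q d (\<eta> a) (proj_mat d))"
    using smod_hom_precomp_Ext[OF tmat_minus[OF tmat_proj_mat] proj_mat_morphism_neg]
    by (simp add: mmul_minus_right)
  moreover have "smod_hom (Aq q) (Ext_mod q (d + e) TX g G) (Ext_mod q e S g G)
      (\<lambda>\<xi> a. - mmul q (d + e) (\<xi> a) (incl_mat d e))"
    using smod_hom_precomp_Ext[OF tmat_minus[OF tmat_incl_mat] incl_mat_morphism_neg]
    by (simp add: mmul_minus_right)
  ultimately show ?thesis
    unfolding exact6_def
    using smod_hom_precomp_Hom[OF tmat_proj_mat proj_mat_morphism]
      smod_hom_precomp_Hom[OF tmat_incl_mat incl_mat_morphism] smod_hom_Der_comp_right[OF Der_\<delta>]
      exact_inj_contravariant exact_at_Hom_X_contravariant exact_at_Hom_F_contravariant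
      exact_at_Ext_E_contravariant exact_at_Ext_X_contravariant exact_surj_contravariant
    by blast
qed

end

theorem theorem10p4:
  fixes p q n :: nat and \<theta> :: "'k::field"
    and d e g :: nat and T S TG :: "'k tmatrix" and \<delta> :: "'k poly \<Rightarrow> 'k tmatrix"
  assumes "prime p" and "CHAR('k) = p" and "n \<ge> 1" and "q = p ^ n"
    and "card (Fq q :: 'k set) = q"
    and "is_tmodule q \<theta> d T" and "is_tmodule q \<theta> e S" and "is_tmodule q \<theta> g TG"
    and "\<delta> \<in> Der q d T e S"
  defines "TX \<equiv> ext_tmat d T \<delta> S"
    and "iM \<equiv> incl_mat d e" and "\<pi>M \<equiv> proj_mat d"
  shows
    "exact6 (Aq q)
       (Hom_mod q g TG e S) (Hom_mod q g TG (d + e) TX) (Hom_mod q g TG d T)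
       (Ext_mod q g TG e S) (Ext_mod q g TG (d + e) TX) (Ext_mod q g TG d T)
       (\<lambda>f. mmul q e iM f)
       (\<lambda>h. mmul q (d + e) \<pi>M h)
       (\<lambda>f a. mmul q d (\<delta> a) f)
       (\<lambda>\<eta> a. mneg (mmul q e iM (\<eta> a)))
       (\<lambda>\<eta> a. mneg (mmul q (d + e) \<pi>M (\<eta> a)))
     \<and>
     exact6 (Aq q)
       (Hom_mod q d T g TG) (Hom_mod q (d + e) TX g TG) (Hom_mod q e S g TG)
       (Ext_mod q d T g TG) (Ext_mod q (d + e) TX g TG) (Ext_mod q e S g TG)
       (\<lambda>h. mmul q d h \<pi>M)
       (\<lambda>h. mmul q (d + e) h iM)
       (\<lambda>h a. mmul q e h (\<delta> a))
       (\<lambda>\<eta> a. mneg (mmul q d (\<eta> a) \<pi>M))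
       (\<lambda>\<eta> a. mneg (mmul q (d + e) (\<eta> a) iM))"
proof -
  have "0 < q"
    using assms(1,4) prime_gt_0_nat by simp
  moreover have "(x + y) ^ q = x ^ q + y ^ q" for x y :: 'k
    using freshmans_dream'[of q n x y] assms(1,2,4) by simp
  moreover have "tmat d d T" "tmat e e S" "tmat g g TG"
    using assms(6-8) by (simp_all add: is_tmodule_def)
  ultimately interpret t_module_extension q "TYPE('k)" d e g T S TG \<delta>
    using assms(9) by unfold_locales
  show ?thesis
    unfolding TX_def iM_def \<pi>M_def matrix_group_ops
    using exact6_covariant exact6_contravariant by blast
qed

end
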